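(* Let $k \geq 3$, $\epsilon > 0$, let $G$ be a finite abelian group with $N = |G|$, let $A_1,\dots,A_k \subseteq G$ and let $(R,\eta)$ be a pair which is $\epsilon$-regular for each $A_i$ (with respect to the parameters $k,\epsilon$). Suppose that $x_1,\dots,x_k \in G$ satisfy $x_1 + \dots + x_k = 0$ and that, for each $i$, $x_i$ is an $\epsilon$-regular value with respect to $A_i$ and $(R,\eta)$. Then \[ \left| T\left(A_1^{+x_1}\psi_1^{1/2}, A_2^{+x_2}\psi_2,\dots,A_{k-1}^{+x_{k-1}}\psi_2, A_k^{+x_k}\psi_1^{1/2}\right) - \alpha_{1,1}^{x_1}\alpha_{2,2}^{x_2}\alpha_{3,2}^{x_3}\cdots\alpha_{k-1,2}^{x_{k-1}}\alpha_{k,1}^{x_k}\right| \leq 4\cdot 2^k\epsilon. \]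
   Context: $G^{\ast}$ is the group of characters $\gamma : G \to \mathbb{C}$; $\widehat{f}(\gamma) = \sum_x f(x)\gamma(x)$; $f \ast g(x) = \sum_y f(y)g(x-y)$; sets are identified with indicator functions; arguments of complex numbers lie in $(-\pi,\pi]$. For $\Gamma = \{\gamma_1,\dots,\gamma_d\} \subseteq G^{\ast}$ let $\|x\|_\Gamma = \max_j|\arg\gamma_j(x)|/(2\pi)$ ($\|x\|_\emptyset = 0$), $B_{\Gamma,t} = \{x : \|x\|_\Gamma \leq t\}$, $\widetilde{B}_{\Gamma,\delta}(x) = \int_0^\infty B_{\Gamma,t}(x)\delta^{-1}e^{-t/\delta}\,dt$, $\beta_{\Gamma,\delta} = \widetilde{B}_{\Gamma,\delta}/\sum_y\widetilde{B}_{\Gamma,\delta}(y)$, $\psi_{\Gamma,\delta} = \beta_{\Gamma,\delta} \ast \beta_{\Gamma,\delta}$. For a pair $(R,\eta)$ with $R \subseteq G^{\ast}$, $d = |R|$, $\eta \in (0,1]$: $\psi_1 = \psi_{R,\eta}$, $\psi_2 = \psi_{R,\eta_2}$ with $\eta_2 = 2^{-40}\epsilon^6\eta/(dk^4)$ (for $d=0$ all $\psi_{\emptyset,\delta} \equiv 1/N$, so $\eta_2$ is immaterial). For $A \subseteq G$, $\alpha_j^x = (A \ast \psi_j)(x)$, and for the sets $A_i$ write $\alpha_{i,j}^x = (A_i \ast \psi_j)(x)$; $A^{+x}(n) = A(x+n)$. A point $x$ is an $\epsilon$-regular value w.r.t. $A$ and $(R,\eta)$ if (i) $\sum_y(\alpha_2^{x+y}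 - \alpha_1^x)^2\psi_1(y) \leq \epsilon^2$ and (ii) $\left|\sum_n (A(x+n) - \alpha_2^x)\psi_2(n)\gamma(n)\right| \leq \epsilon$ for all $\gamma \in G^{\ast}$. $(R,\eta)$ is $\epsilon$-regular for $A$ if fewer than $\epsilon N$ points $x$ are not $\epsilon$-regular values. For $f_1,\dots,f_k : G \to \mathbb{R}$, $T(f_1,\dots,f_k) = \sum_{x_1+\dots+x_k = 0} f_1(x_1)\cdots f_k(x_k)$; products such as $A_i^{+x_i}\psi_2$ are pointwise products. *)

theory Defs
  imports "HOL-Analysis.Analysis"
begin

definition character :: "('a::{ab_group_add,finite} \<Rightarrow> complex) \<Rightarrow> bool" where
  "character \<gamma> \<longleftrightarrow> (\<forall>x y. \<gamma> (x + y) = \<gamma> x * \<gamma> y) \<and> (\<forall>x. \<gamma> x \<noteq> 0)"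

definition characters :: "('a::{ab_group_add,finite} \<Rightarrow> complex) set" where
  "characters = {\<gamma>. character \<gamma>}"

(* \<parallel>x\<parallel>_\<Gamma> = max_j |arg \<gamma>_j(x)| / (2\<pi>), and 0 for \<Gamma> = {};  Arg takes values in (-pi, pi] *)
definition gnorm :: "('a::{ab_group_add,finite} \<Rightarrow> complex) set \<Rightarrow> 'a \<Rightarrow> real" where
  "gnorm \<Gamma> x = (if \<Gamma> = {} then 0 else Max ((\<lambda>\<gamma>. \<bar>Arg (\<gamma> x)\<bar> / (2 * pi)) ` \<Gamma>))"

definition bohr :: "('a::{ab_group_add,finite} \<Rightarrow> complex) set \<Rightarrow> real \<Rightarrow> 'a set" where
  "bohr \<Gamma> t = {x. gnorm \<Gamma> x \<le> t}"

definition bohr_smooth :: "('a::{ab_group_add,finite} \<Rightarrow> complex) set \<Rightarrow> real \<Rightarrow> 'a \<Rightarrow> real" where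
  "bohr_smooth \<Gamma> \<delta> x =
     (LINT t:{0..}|lborel. indicator (bohr \<Gamma> t) x * (1 / \<delta>) * exp (- t / \<delta>))"

definition beta :: "('a::{ab_group_add,finite} \<Rightarrow> complex) set \<Rightarrow> real \<Rightarrow> 'a \<Rightarrow> real" where
  "beta \<Gamma> \<delta> x = bohr_smooth \<Gamma> \<delta> x / (\<Sum>y\<in>UNIV. bohr_smooth \<Gamma> \<delta> y)"

definition conv :: "('a::{ab_group_add,finite} \<Rightarrow> real) \<Rightarrow> ('a \<Rightarrow> real) \<Rightarrow> 'a \<Rightarrow> real" where
  "conv f g x = (\<Sum>y\<in>UNIV. f y * g (x - y))"

definition psi :: "('a::{ab_group_add,finite} \<Rightarrow> complex) set \<Rightarrow> real \<Rightarrow> 'a \<Rightarrow> real" where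
  "psi \<Gamma> \<delta> = (if \<Gamma> = {} then (\<lambda>_. 1 / real CARD('a)) else conv (beta \<Gamma> \<delta>) (beta \<Gamma> \<delta>))"

definition eta2 :: "nat \<Rightarrow> real \<Rightarrow> ('a::{ab_group_add,finite} \<Rightarrow> complex) set \<Rightarrow> real \<Rightarrow> real" where
  "eta2 k \<epsilon> R \<eta> = \<epsilon> ^ 6 * \<eta> / (2 ^ 40 * real (card R) * real k ^ 4)"

definition psi1 :: "('a::{ab_group_add,finite} \<Rightarrow> complex) set \<Rightarrow> real \<Rightarrow> 'a \<Rightarrow> real" where
  "psi1 R \<eta> = psi R \<eta>"

definition psi2 :: "nat \<Rightarrow> real \<Rightarrow> ('a::{ab_group_add,finite} \<Rightarrow> complex) set \<Rightarrow> real \<Rightarrow> 'a \<Rightarrow> real" where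
  "psi2 k \<epsilon> R \<eta> = psi R (eta2 k \<epsilon> R \<eta>)"

definition alpha1 :: "'a::{ab_group_add,finite} set \<Rightarrow> ('a \<Rightarrow> complex) set \<Rightarrow> real \<Rightarrow> 'a \<Rightarrow> real" where
  "alpha1 A R \<eta> x = conv (indicator A) (psi1 R \<eta>) x"

definition alpha2 :: "nat \<Rightarrow> real \<Rightarrow> 'a::{ab_group_add,finite} set \<Rightarrow> ('a \<Rightarrow> complex) set \<Rightarrow> real \<Rightarrow> 'a \<Rightarrow> real" where
  "alpha2 k \<epsilon> A R \<eta> x = conv (indicator A) (psi2 k \<epsilon> R \<eta>) x"

definition regular_value ::
  "nat \<Rightarrow> real \<Rightarrow> 'a::{ab_group_add,finite} set \<Rightarrow> ('a \<Rightarrow> complex) set \<Rightarrow> real \<Rightarrow> 'a \<Rightarrow> bool" where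
  "regular_value k \<epsilon> A R \<eta> x \<longleftrightarrow>
     (\<Sum>y\<in>UNIV. (alpha2 k \<epsilon> A R \<eta> (x + y) - alpha1 A R \<eta> x)\<^sup>2 * psi1 R \<eta> y) \<le> \<epsilon>\<^sup>2 \<and>
     (\<forall>\<gamma>\<in>characters.
        cmod (\<Sum>n\<in>UNIV. complex_of_real ((indicator A (x + n) - alpha2 k \<epsilon> A R \<eta> x) * psi2 k \<epsilon> R \<eta> n) * \<gamma> n)
          \<le> \<epsilon>)"

definition regular_pair ::
  "nat \<Rightarrow> real \<Rightarrow> 'a::{ab_group_add,finite} set \<Rightarrow> ('a \<Rightarrow> complex) set \<Rightarrow> real \<Rightarrow> bool" where
  "regular_pair k \<epsilon> A R \<eta> \<longleftrightarrow>
     real (card {x. \<not> regular_value k \<epsilon> A R \<eta> x}) < \<epsilon> * real CARD('a)"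

definition Tform :: "nat \<Rightarrow> (nat \<Rightarrow> 'a::{ab_group_add,finite} \<Rightarrow> real) \<Rightarrow> real" where
  "Tform k f = (\<Sum>x\<in>{x\<in>PiE {1..k} (\<lambda>_. UNIV). (\<Sum>i=1..k. x i) = 0}. \<Prod>i=1..k. f i (x i))"

end

theory Submission
  imports Defs
begin

(* Fourier inversion on G gives T(f_1, ..., f_k) = |G^*|^-1 * sum over characters of the products
   of the Fourier coefficients of the f_i; that there are enough characters for this is shown by
   extending characters from subgroups one cyclic step at a time.  Condition (ii) of a regular
   value says that each middle function A_i^{+x_i} psi_2 has Fourier coefficients within epsilon
   of those of alpha_{i,2}^{x_i} psi_2, so by telescoping and Parseval the middle functions may
   be replaced by these averages at a cost of (k - 2) epsilon.  What remains is the product of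
   the middle averages times a pairing of the two end functions against the (k-2)-fold
   convolution power of psi_2.  As psi_2 lives on a Bohr set far narrower than psi_1, translating
   psi_1 by a typical point of that convolution power barely changes it in L1; together with
   condition (i) at x_k and Cauchy-Schwarz this puts the pairing within 3/2 epsilon of
   alpha_{1,1} alpha_{k,1}.  The
   concentration of psi_2 follows from the log-convexity of the Bohr partition function
   c -> sum_n exp (- c ||n||) and a doubling bound for it, proved by covering G with boxes in
   the arguments of the characters in R.  For epsilon >= 1 a crude bound suffices. *)

section \<open>Characters of finite abelian groups\<close>

primrec nsmul :: "nat \<Rightarrow> 'a::monoid_add \<Rightarrow> 'a" where
  "nsmul 0 g = 0"
| "nsmul (Suc n) g = g + nsmul n g"

lemma nsmul_add: "nsmul (a + b) g = nsmul a g + nsmul b g"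
  for g :: "'a::comm_monoid_add"
  by (induction a) (simp_all add: add.assoc)

lemma nsmul_mult: "nsmul (a * b) g = nsmul a (nsmul b g)"
  for g :: "'a::comm_monoid_add"
  by (induction a) (simp_all add: nsmul_add)

lemma nsmul_diff: "j \<le> i \<Longrightarrow> nsmul i g - nsmul j g = nsmul (i - j) g"
  for g :: "'a::ab_group_add"
  by (metis add_diff_cancel_left' le_add_diff_inverse nsmul_add)

lemma exists_nsmul_eq_0:
  fixes g :: "'a::{ab_group_add,finite}"
  obtains m where "0 < m" "nsmul m g = 0"
proof -
  have "\<not> inj (\<lambda>n. nsmul n g)"
    using finite_imageD[of "\<lambda>n. nsmul n g" UNIV] by auto
  then obtain i j where ij: "i < j" "nsmul i g = nsmul j g"
    unfolding inj_def by (metis linorder_neqE_nat)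
  then have "nsmul (j - i) g = 0"
    by (metis diff_self less_imp_le nsmul_diff)
  with ij show ?thesis using that[of "j - i"] by simp
qed

definition add_subgroup :: "'a::ab_group_add set \<Rightarrow> bool" where
  "add_subgroup H \<longleftrightarrow> 0 \<in> H \<and> (\<forall>x\<in>H. \<forall>y\<in>H. x + y \<in> H) \<and> (\<forall>x\<in>H. - x \<in> H)"

definition character_on :: "'a::ab_group_add set \<Rightarrow> ('a \<Rightarrow> complex) \<Rightarrow> bool" where
  "character_on H \<xi> \<longleftrightarrow> (\<forall>x\<in>H. \<forall>y\<in>H. \<xi> (x + y) = \<xi> x * \<xi> y) \<and> (\<forall>x\<in>H. \<xi> x \<noteq> 0)"

lemma add_subgroup_diff: "add_subgroup H \<Longrightarrow> x \<in> H \<Longrightarrow> y \<in> H \<Longrightarrow> x - y \<in> H"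
  unfolding add_subgroup_def by (metis diff_conv_add_uminus)

lemma add_subgroup_nsmul: "add_subgroup H \<Longrightarrow> x \<in> H \<Longrightarrow> nsmul n x \<in> H"
  by (induction n) (auto simp: add_subgroup_def)

lemma character_on_0: "add_subgroup H \<Longrightarrow> character_on H \<xi> \<Longrightarrow> \<xi> 0 = 1"
  unfolding add_subgroup_def character_on_def by (metis add_0 mult_cancel_left2)

lemma character_on_nsmul:
  "add_subgroup H \<Longrightarrow> character_on H \<xi> \<Longrightarrow> x \<in> H \<Longrightarrow> \<xi> (nsmul n x) = \<xi> x ^ n"
  by (induction n) (auto simp: character_on_0 character_on_def add_subgroup_nsmul)

lemma exists_least_nsmul_mem:
  fixes g :: "'a::{ab_group_add,finite}"
  assumes "0 \<in> H"
  obtains m where "0 < m" "nsmul m g \<in> H" "\<And>j. 0 < j \<Longrightarrow> j < m \<Longrightarrow> nsmul j g \<notin> H"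
proof -
  obtain m0 where "0 < m0" "nsmul m0 g = 0" using exists_nsmul_eq_0 .
  then have "\<exists>m. 0 < m \<and> nsmul m g \<in> H" using assms by auto
  then show ?thesis using that unfolding exists_least_iff[of "\<lambda>m. 0 < m \<and> nsmul m g \<in> H"] by blast
qed

lemma nsmul_mem_imp_dvd:
  assumes H: "add_subgroup H" and m: "0 < m" "nsmul m g \<in> H"
    "\<And>j. 0 < j \<Longrightarrow> j < m \<Longrightarrow> nsmul j g \<notin> H"
    and j: "nsmul j g \<in> H"
  shows "m dvd j"
proof -
  have "nsmul j g = nsmul (j div m) (nsmul m g) + nsmul (j mod m) g"
    by (metis div_mult_mod_eq nsmul_add nsmul_mult)
  then have "nsmul (j mod m) g = nsmul j g - nsmul (j div m) (nsmul m g)"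
    by (simp add: algebra_simps)
  also have "\<dots> \<in> H" using H j m(2) by (simp add: add_subgroup_diff add_subgroup_nsmul)
  finally show ?thesis using m(3)[of "j mod m"] m(1) by (metis gr0I mod_less_divisor dvd_eq_mod_eq_0)
qed

lemma add_subgroup_extend:
  assumes H: "add_subgroup H" and "0 < m" "nsmul m g \<in> H"
  shows "add_subgroup {h + nsmul j g | h j. h \<in> H}"
  unfolding add_subgroup_def
proof (intro conjI ballI)
  show "0 \<in> {h + nsmul j g | h j. h \<in> H}"
    using H by (force simp: add_subgroup_def intro: exI[of _ 0])
next
  fix y1 y2 assume "y1 \<in> {h + nsmul j g | h j. h \<in> H}" "y2 \<in> {h + nsmul j g | h j. h \<in> H}"
  then obtain h1 j1 h2 j2 where "h1 \<in> H" "h2 \<in> H" "y1 = h1 + nsmul j1 g" "y2 = h2 + nsmul j2 g"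
    by blast
  then have "h1 + h2 \<in> H" "y1 + y2 = (h1 + h2) + nsmul (j1 + j2) g"
    using H by (simp_all add: add_subgroup_def nsmul_add algebra_simps)
  then show "y1 + y2 \<in> {h + nsmul j g | h j. h \<in> H}" by blast
next
  fix y assume "y \<in> {h + nsmul j g | h j. h \<in> H}"
  then obtain h j where hj: "h \<in> H" "y = h + nsmul j g" by blast
  \<comment> \<open>negation stays inside since - (j g) = (j m - j) g - j (m g) and m g lies in H\<close>
  have "nsmul (j * m) g - nsmul j g = nsmul (j * m - j) g"
    using \<open>0 < m\<close> by (intro nsmul_diff) simp
  then have "- y = (- h - nsmul j (nsmul m g)) + nsmul (j * m - j) g"
    using hj by (simp add: nsmul_mult[symmetric] algebra_simps)
  moreover have "- h - nsmul j (nsmul m g) \<in> H"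
    using H hj(1) assms(3) by (metis add_subgroup_def add_subgroup_diff add_subgroup_nsmul)
  ultimately show "- y \<in> {h + nsmul j g | h j. h \<in> H}" by blast
qed

lemma character_on_extension_well_defined:
  assumes H: "add_subgroup H" and \<xi>: "character_on H \<xi>"
    and m: "0 < m" "nsmul m g \<in> H" "\<And>j. 0 < j \<Longrightarrow> j < m \<Longrightarrow> nsmul j g \<notin> H"
    and c: "c ^ m = \<xi> (nsmul m g)"
    and h: "h1 \<in> H" "h2 \<in> H" "h1 + nsmul j1 g = h2 + nsmul j2 g"
  shows "\<xi> h1 * c ^ j1 = \<xi> h2 * c ^ j2"
proof -
  have le: "\<xi> h1 * c ^ j1 = \<xi> h2 * c ^ j2"
    if "h1 \<in> H" "h2 \<in> H" "h1 + nsmul j1 g = h2 + nsmul j2 g" "j1 \<le> j2" for h1 h2 j1 j2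
  proof -
    have "h1 - h2 = nsmul (j2 - j1) g"
      using that(3,4) nsmul_diff[of j1 j2 g] by (simp add: algebra_simps)
    moreover have "h1 - h2 \<in> H" using add_subgroup_diff[OF H that(1,2)] .
    ultimately obtain q where q: "j2 - j1 = m * q"
      using nsmul_mem_imp_dvd[OF H m] by (metis dvdE)
    then have "h1 = h2 + nsmul q (nsmul m g)"
      using \<open>h1 - h2 = _\<close> by (metis diff_add_cancel add.commute mult.commute nsmul_mult)
    then have "\<xi> h1 = \<xi> h2 * c ^ (m * q)"
      using \<xi> H that(2) m(2) c
      by (simp add: character_on_def add_subgroup_nsmul character_on_nsmul power_mult)
    moreover have "j2 = j1 + m * q" using q that(4) by simp
    ultimately show ?thesis by (simp add: power_add mult_ac)
  qed
  show ?thesis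
    using le[OF h] le[OF h(2,1) h(3)[symmetric]] by (cases "j1 \<le> j2") auto
qed

lemma character_on_extend:
  assumes H: "add_subgroup H" and \<xi>: "character_on H \<xi>"
    and m: "0 < m" "nsmul m g \<in> H" "\<And>j. 0 < j \<Longrightarrow> j < m \<Longrightarrow> nsmul j g \<notin> H"
    and c: "c ^ m = \<xi> (nsmul m g)"
  obtains H' \<xi>' where "add_subgroup H'" "character_on H' \<xi>'" "H \<subseteq> H'" "g \<in> H'"
    "\<forall>h\<in>H. \<xi>' h = \<xi> h" "\<xi>' g = c"
proof -
  define H' where "H' = {h + nsmul j g | h j. h \<in> H}"
  have mem_H': "h + nsmul j g \<in> H'" if "h \<in> H" for h j
    unfolding H'_def using that by blast
  have "0 \<in> H" using H by (simp add: add_subgroup_def)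
  define \<xi>' where "\<xi>' y = (let p = SOME p. fst p \<in> H \<and> y = fst p + nsmul (snd p) g
                            in \<xi> (fst p) * c ^ snd p)" for y
  have \<xi>'_eq: "\<xi>' (h + nsmul j g) = \<xi> h * c ^ j" if "h \<in> H" for h j
  proof -
    let ?p = "SOME p. fst p \<in> H \<and> h + nsmul j g = fst p + nsmul (snd p) g"
    have "fst ?p \<in> H \<and> h + nsmul j g = fst ?p + nsmul (snd ?p) g"
      by (rule someI[of _ "(h, j)"]) (simp add: that)
    then show ?thesis
      using character_on_extension_well_defined[OF H \<xi> m c that, of "fst ?p" j "snd ?p"]
      by (simp add: \<xi>'_def Let_def)
  qed
  have "c \<noteq> 0"
    using c m \<xi> by (auto simp: character_on_def power_0_left)
  have "character_on H' \<xi>'"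
    unfolding character_on_def
  proof (intro conjI ballI)
    fix y1 y2 assume "y1 \<in> H'" "y2 \<in> H'"
    then obtain h1 j1 h2 j2 where hj: "h1 \<in> H" "h2 \<in> H" "y1 = h1 + nsmul j1 g" "y2 = h2 + nsmul j2 g"
      unfolding H'_def by blast
    have "y1 + y2 = (h1 + h2) + nsmul (j1 + j2) g" using hj by (simp add: nsmul_add algebra_simps)
    moreover have "h1 + h2 \<in> H" using hj H by (simp add: add_subgroup_def)
    ultimately have "\<xi>' (y1 + y2) = \<xi> (h1 + h2) * c ^ (j1 + j2)" by (simp add: \<xi>'_eq)
    then show "\<xi>' (y1 + y2) = \<xi>' y1 * \<xi>' y2"
      using hj \<xi> by (simp add: \<xi>'_eq character_on_def power_add)
  next
    fix y assume "y \<in> H'"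
    then show "\<xi>' y \<noteq> 0"
      using \<xi> \<open>c \<noteq> 0\<close> unfolding H'_def character_on_def by (auto simp: \<xi>'_eq)
  qed
  moreover have "H \<subseteq> H'" using mem_H'[of _ 0] by auto
  moreover have "g \<in> H'" using mem_H'[OF \<open>0 \<in> H\<close>, of 1] by simp
  moreover have "\<forall>h\<in>H. \<xi>' h = \<xi> h" using \<xi>'_eq[of _ 0] by simp
  moreover have "\<xi>' g = c"
    using \<xi>'_eq[OF \<open>0 \<in> H\<close>, of 1] character_on_0[OF H \<xi>] by simp
  ultimately show ?thesis
    using that add_subgroup_extend[OF H m(1,2)] unfolding H'_def by blast
qed

lemma character_on_extends_to_character:
  fixes H :: "'a::{ab_group_add,finite} set"
  assumes "add_subgroup H" "character_on H \<xi>"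
  shows "\<exists>\<gamma>. character \<gamma> \<and> (\<forall>h\<in>H. \<gamma> h = \<xi> h)"
  using assms
proof (induction "card (- H)" arbitrary: H \<xi> rule: less_induct)
  case less
  show ?case
  proof (cases "H = UNIV")
    case True
    then show ?thesis using less.prems by (auto simp: character_def character_on_def)
  next
    case False
    then obtain g where "g \<notin> H" by auto
    obtain m where m: "0 < m" "nsmul m g \<in> H" "\<And>j. 0 < j \<Longrightarrow> j < m \<Longrightarrow> nsmul j g \<notin> H"
      using exists_least_nsmul_mem[of H g] less.prems(1) unfolding add_subgroup_def by blast
    have "\<xi> (nsmul m g) \<noteq> 0" using less.prems(2) m(2) by (simp add: character_on_def)
    then have c: "(exp (Ln (\<xi> (nsmul m g)) / of_nat m)) ^ m = \<xi> (nsmul m g)"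
      using m(1) by (simp add: exp_of_nat_mult[symmetric])
    obtain H' \<xi>' where H': "add_subgroup H'" "character_on H' \<xi>'" "H \<subseteq> H'" "g \<in> H'"
      "\<forall>h\<in>H. \<xi>' h = \<xi> h" "\<xi>' g = exp (Ln (\<xi> (nsmul m g)) / of_nat m)"
      by (rule character_on_extend[OF less.prems m c])
    have "card (- H') < card (- H)"
      using H'(3,4) \<open>g \<notin> H\<close> by (intro psubset_card_mono) auto
    then obtain \<gamma> where \<gamma>: "character \<gamma>" "\<forall>h\<in>H'. \<gamma> h = \<xi>' h"
      using less.hyps[OF _ H'(1,2)] by blast
    have "\<forall>h\<in>H. \<gamma> h = \<xi> h"
    proof
      fix h assume "h \<in> H"
      then show "\<gamma> h = \<xi> h" using \<gamma>(2) H'(3,5) by (metis subsetD)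
    qed
    then show ?thesis using \<gamma>(1) by blast
  qed
qed

lemma separating_character:
  fixes s :: "'a::{ab_group_add,finite}"
  assumes "s \<noteq> 0"
  obtains \<gamma> where "character \<gamma>" "\<gamma> s \<noteq> 1"
proof -
  have H: "add_subgroup {0::'a}" and \<xi>: "character_on {0} (\<lambda>_. 1)"
    by (auto simp: add_subgroup_def character_on_def)
  obtain m where m: "0 < m" "nsmul m s \<in> {0}" "\<And>j. 0 < j \<Longrightarrow> j < m \<Longrightarrow> nsmul j s \<notin> {0}"
    using exists_least_nsmul_mem by blast
  have "1 < m" using m(1,2) assms by (cases "m = 1") auto
  define c where "c = cis (2 * pi / real m)"
  have "c \<noteq> 1"
  proof
    let ?root = "\<lambda>k. cis (2 * pi * real k / real m)"
    assume "c = 1"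
    then have "?root 1 = ?root 0" by (simp add: c_def)
    moreover have "inj_on ?root {..<m}"
      using Complex.bij_betw_roots_unity[OF m(1)] by (simp add: bij_betw_def)
    ultimately show False using \<open>1 < m\<close> by (metis inj_onD lessThan_iff m(1) zero_neq_one)
  qed
  have cm: "c ^ m = (\<lambda>_. 1) (nsmul m s)" using m(1) by (simp add: c_def Complex.DeMoivre)
  obtain H' \<xi>' where H': "add_subgroup H'" "character_on H' \<xi>'" "{0} \<subseteq> H'" "s \<in> H'"
      "\<forall>h\<in>{0}. \<xi>' h = 1" "\<xi>' s = c"
    by (rule character_on_extend[OF H \<xi> m cm])
  obtain \<gamma> where "character \<gamma>" "\<forall>h\<in>H'. \<gamma> h = \<xi>' h"
    using character_on_extends_to_character[OF H'(1,2)] by blast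
  then show ?thesis using that H'(4,6) \<open>c \<noteq> 1\<close> by simp
qed

lemma character_0: "character \<gamma> \<Longrightarrow> \<gamma> 0 = 1"
  unfolding character_def by (metis add_0 mult_cancel_left2)

lemma character_add: "character \<gamma> \<Longrightarrow> \<gamma> (x + y) = \<gamma> x * \<gamma> y"
  by (simp add: character_def)

lemma character_nonzero: "character \<gamma> \<Longrightarrow> \<gamma> x \<noteq> 0"
  by (simp add: character_def)

lemma character_power_card:
  fixes \<gamma> :: "'a::{ab_group_add,finite} \<Rightarrow> complex"
  assumes "character \<gamma>"
  shows "\<gamma> x ^ CARD('a) = 1"
proof -
  have "(\<Prod>y\<in>UNIV. \<gamma> y) = (\<Prod>y\<in>UNIV. \<gamma> (y + x))"
    by (rule prod.reindex_bij_witness[of _ "\<lambda>y. y + x" "\<lambda>y. y - x"]) auto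
  also have "\<dots> = (\<Prod>y\<in>UNIV. \<gamma> y) * \<gamma> x ^ CARD('a)"
    by (simp add: character_add[OF assms] prod.distrib)
  finally show ?thesis
    using character_nonzero[OF assms] by simp
qed

lemma norm_character: "character \<gamma> \<Longrightarrow> norm (\<gamma> x) = 1"
  for \<gamma> :: "'a::{ab_group_add,finite} \<Rightarrow> complex"
  using power_eq_1_iff[OF character_power_card] by auto

lemma character_uminus: "character \<gamma> \<Longrightarrow> \<gamma> (- x) = cnj (\<gamma> x)"
  for \<gamma> :: "'a::{ab_group_add,finite} \<Rightarrow> complex"
proof -
  assume c: "character \<gamma>"
  have "\<gamma> (- x) * \<gamma> x = 1" using character_add[OF c, of "- x" x] by (simp add: character_0[OF c])
  moreover have "cnj (\<gamma> x) * \<gamma> x = 1"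
    using complex_norm_square[of "\<gamma> x"] norm_character[OF c, of x] by (simp add: mult.commute)
  ultimately show ?thesis using character_nonzero[OF c, of x] by (metis mult_right_cancel)
qed

lemma character_sum: "character \<gamma> \<Longrightarrow> \<gamma> (\<Sum>i\<in>I. p i) = (\<Prod>i\<in>I. \<gamma> (p i))"
  by (induction I rule: infinite_finite_induct) (auto simp: character_0 character_add)

lemma finite_characters: "finite (characters :: ('a::{ab_group_add,finite} \<Rightarrow> complex) set)"
proof (rule finite_subset)
  show "characters \<subseteq> PiE UNIV (\<lambda>_::'a. {z. z ^ CARD('a) = 1})"
    using character_power_card by (auto simp: characters_def)
  show "finite (PiE UNIV (\<lambda>_::'a. {z::complex. z ^ CARD('a) = 1}))"
    by (intro finite_PiE finite_roots_unity) auto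
qed

lemma card_characters_pos: "0 < card (characters :: ('a::{ab_group_add,finite} \<Rightarrow> complex) set)"
proof -
  have "(\<lambda>_. 1) \<in> (characters :: ('a \<Rightarrow> complex) set)" by (simp add: characters_def character_def)
  then show ?thesis using finite_characters card_gt_0_iff by blast
qed

lemma sum_characters:
  fixes s :: "'a::{ab_group_add,finite}"
  shows "(\<Sum>\<gamma>\<in>characters. \<gamma> s) = (if s = 0 then of_nat (card (characters :: ('a \<Rightarrow> complex) set)) else 0)"
proof (cases "s = 0")
  case True
  then show ?thesis by (simp add: characters_def character_0)
next
  case False
  obtain \<gamma>0 where \<gamma>0: "character \<gamma>0" "\<gamma>0 s \<noteq> 1" using separating_character[OF False] .
  have "(\<Sum>\<gamma>\<in>characters. \<gamma> s) = (\<Sum>\<gamma>\<in>characters. \<gamma>0 s * \<gamma> s)"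
    by (rule sum.reindex_bij_witness[of _ "\<lambda>\<gamma> x. \<gamma>0 x * \<gamma> x" "\<lambda>\<gamma> x. \<gamma> x / \<gamma>0 x"])
      (use \<gamma>0 in \<open>auto simp: characters_def character_def character_nonzero\<close>)
  also have "\<dots> = \<gamma>0 s * (\<Sum>\<gamma>\<in>characters. \<gamma> s)"
    by (simp add: sum_distrib_left)
  finally have "(1 - \<gamma>0 s) * (\<Sum>\<gamma>\<in>characters. \<gamma> s) = 0"
    by (simp add: left_diff_distrib)
  then show ?thesis using \<gamma>0(2) False by simp
qed


section \<open>Fourier analysis on a finite abelian group\<close>

definition fourier :: "('a::{ab_group_add,finite} \<Rightarrow> real) \<Rightarrow> ('a \<Rightarrow> complex) \<Rightarrow> complex" where
  "fourier g \<gamma> = (\<Sum>x\<in>UNIV. complex_of_real (g x) * \<gamma> x)"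

lemma Tform_eq_fourier:
  fixes g :: "nat \<Rightarrow> 'a::{ab_group_add,finite} \<Rightarrow> real"
  shows "complex_of_real (Tform k g) =
    (\<Sum>\<gamma>\<in>characters. \<Prod>i\<in>{1..k}. fourier (g i) \<gamma>) / of_nat (card (characters :: ('a \<Rightarrow> complex) set))"
proof -
  let ?M = "of_nat (card (characters :: ('a \<Rightarrow> complex) set)) :: complex"
  define P where "P = PiE {1..k} (\<lambda>_. UNIV :: 'a set)"
  have "finite P" unfolding P_def by (intro finite_PiE) auto
  have "(\<Sum>\<gamma>\<in>characters. \<Prod>i\<in>{1..k}. fourier (g i) \<gamma>) =
        (\<Sum>\<gamma>\<in>characters. \<Sum>p\<in>P. complex_of_real (\<Prod>i\<in>{1..k}. g i (p i)) * \<gamma> (\<Sum>i\<in>{1..k}. p i))"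
  proof (rule sum.cong[OF refl])
    fix \<gamma> :: "'a \<Rightarrow> complex" assume "\<gamma> \<in> characters"
    then have "character \<gamma>" by (simp add: characters_def)
    have "(\<Prod>i\<in>{1..k}. fourier (g i) \<gamma>) = (\<Sum>p\<in>P. \<Prod>i\<in>{1..k}. complex_of_real (g i (p i)) * \<gamma> (p i))"
      unfolding fourier_def P_def by (rule prod_sum_PiE) auto
    also have "\<dots> = (\<Sum>p\<in>P. complex_of_real (\<Prod>i\<in>{1..k}. g i (p i)) * \<gamma> (\<Sum>i\<in>{1..k}. p i))"
      by (simp add: prod.distrib character_sum[OF \<open>character \<gamma>\<close>])
    finally show "(\<Prod>i\<in>{1..k}. fourier (g i) \<gamma>) = \<dots>" .
  qed
  also have "\<dots> = (\<Sum>p\<in>P. complex_of_real (\<Prod>i\<in>{1..k}. g i (p i)) * (\<Sum>\<gamma>\<in>characters. \<gamma> (\<Sum>i\<in>{1..k}. p i)))"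
    by (subst sum.swap) (simp add: sum_distrib_left)
  also have "\<dots> = (\<Sum>p\<in>{p\<in>P. (\<Sum>i\<in>{1..k}. p i) = 0}. complex_of_real (\<Prod>i\<in>{1..k}. g i (p i)) * ?M)"
    unfolding sum_characters by (subst sum.inter_filter[OF \<open>finite P\<close>]) (intro sum.cong refl, simp)
  also have "\<dots> = complex_of_real (Tform k g) * ?M"
    by (simp add: Tform_def P_def sum_distrib_right)
  finally show ?thesis using card_characters_pos[where 'a='a] by (simp add: field_simps)
qed

lemma fourier_conv:
  fixes f g :: "'a::{ab_group_add,finite} \<Rightarrow> real"
  assumes "\<gamma> \<in> characters"
  shows "fourier (conv f g) \<gamma> = fourier f \<gamma> * fourier g \<gamma>"
proof -
  have "fourier (conv f g) \<gamma> =
      (\<Sum>y\<in>UNIV. \<Sum>x\<in>UNIV. complex_of_real (f y) * complex_of_real (g (x - y)) * \<gamma> x)"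
    unfolding fourier_def conv_def by (subst sum.swap) (simp add: sum_distrib_right)
  also have "\<dots> = (\<Sum>y\<in>UNIV. \<Sum>u\<in>UNIV. complex_of_real (f y) * complex_of_real (g u) * \<gamma> (y + u))"
  proof (rule sum.cong[OF refl])
    fix y
    show "(\<Sum>x\<in>UNIV. complex_of_real (f y) * complex_of_real (g (x - y)) * \<gamma> x) =
          (\<Sum>u\<in>UNIV. complex_of_real (f y) * complex_of_real (g u) * \<gamma> (y + u))"
      by (rule sum.reindex_bij_witness[of _ "\<lambda>u. y + u" "\<lambda>x. x - y"]) auto
  qed
  also have "\<dots> = fourier f \<gamma> * fourier g \<gamma>"
    using assms unfolding fourier_def sum_product
    by (simp add: character_add characters_def algebra_simps)
  finally show ?thesis .
qed

lemma sum_mult_reflect_eq_fourier: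
  fixes f g :: "'a::{ab_group_add,finite} \<Rightarrow> real"
  shows "complex_of_real (\<Sum>x\<in>UNIV. f x * g (- x)) =
    (\<Sum>\<gamma>\<in>characters. fourier f \<gamma> * fourier g \<gamma>) / of_nat (card (characters :: ('a \<Rightarrow> complex) set))"
proof -
  let ?M = "of_nat (card (characters :: ('a \<Rightarrow> complex) set)) :: complex"
  have "(\<Sum>\<gamma>\<in>characters. fourier f \<gamma> * fourier g \<gamma>) =
      (\<Sum>\<gamma>\<in>characters. \<Sum>x\<in>UNIV. \<Sum>y\<in>UNIV. complex_of_real (f x * g y) * \<gamma> (x + y))"
    unfolding fourier_def sum_product
    by (intro sum.cong refl) (simp add: character_add characters_def algebra_simps)
  also have "\<dots> = (\<Sum>x\<in>UNIV. \<Sum>y\<in>UNIV. complex_of_real (f x * g y) * (\<Sum>\<gamma>\<in>characters. \<gamma> (x + y)))"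
    by (simp add: sum_distrib_left sum.swap[of _ characters])
  also have "\<dots> = (\<Sum>x\<in>UNIV. \<Sum>y\<in>UNIV. if y = - x then complex_of_real (f x * g y) * ?M else 0)"
    unfolding sum_characters by (intro sum.cong refl) (auto simp: add_eq_0_iff)
  also have "\<dots> = complex_of_real (\<Sum>x\<in>UNIV. f x * g (- x)) * ?M"
    by (simp add: sum_distrib_right)
  finally show ?thesis using card_characters_pos[where 'a='a] by (simp add: field_simps)
qed

lemma trilinear_sum_eq_fourier:
  fixes g h w :: "'a::{ab_group_add,finite} \<Rightarrow> real"
  shows "complex_of_real (\<Sum>y\<in>UNIV. \<Sum>z\<in>UNIV. g y * h z * w (- (y + z))) =
    (\<Sum>\<gamma>\<in>characters. fourier g \<gamma> * fourier h \<gamma> * fourier w \<gamma>) / of_nat (card (characters :: ('a \<Rightarrow> complex) set))"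
proof -
  have "(\<Sum>z\<in>UNIV. g y * h z * w (- (y + z))) = (\<Sum>x\<in>UNIV. g y * h (x - y) * w (- x))" for y
    by (rule sum.reindex_bij_witness[of _ "\<lambda>x. x - y" "\<lambda>z. y + z"]) auto
  then have "complex_of_real (\<Sum>y\<in>UNIV. \<Sum>z\<in>UNIV. g y * h z * w (- (y + z))) =
      complex_of_real (\<Sum>x\<in>UNIV. conv g h x * w (- x))"
    unfolding conv_def sum_distrib_right by (subst sum.swap) simp
  also have "\<dots> =
      (\<Sum>\<gamma>\<in>characters. fourier (conv g h) \<gamma> * fourier w \<gamma>) / of_nat (card (characters :: ('a \<Rightarrow> complex) set))"
    by (rule sum_mult_reflect_eq_fourier)
  finally show ?thesis
    by (simp add: fourier_conv cong: sum.cong)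
qed

lemma parseval:
  fixes g :: "'a::{ab_group_add,finite} \<Rightarrow> real"
  shows "(\<Sum>\<gamma>\<in>characters. (norm (fourier g \<gamma>))\<^sup>2) =
    card (characters :: ('a \<Rightarrow> complex) set) * (\<Sum>x\<in>UNIV. (g x)\<^sup>2)"
proof -
  have "cnj (fourier g \<gamma>) = fourier (\<lambda>x. g (- x)) \<gamma>" if "\<gamma> \<in> characters" for \<gamma>
    unfolding fourier_def cnj_sum using that
    by (intro sum.reindex_bij_witness[of _ uminus uminus]) (auto simp: character_uminus characters_def)
  then have "complex_of_real (\<Sum>\<gamma>\<in>characters. (norm (fourier g \<gamma>))\<^sup>2) =
      (\<Sum>\<gamma>\<in>characters. fourier g \<gamma> * fourier (\<lambda>x. g (- x)) \<gamma>)"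
    unfolding of_real_sum complex_norm_square by simp
  also have "\<dots> = complex_of_real (card (characters :: ('a \<Rightarrow> complex) set) * (\<Sum>x\<in>UNIV. (g x)\<^sup>2))"
    using sum_mult_reflect_eq_fourier[of g "\<lambda>x. g (- x)"] card_characters_pos[where 'a='a]
    by (simp add: field_simps power2_eq_square)
  finally show ?thesis using of_real_eq_iff by blast
qed

lemma sum_norm_fourier_mult_le:
  fixes g h :: "'a::{ab_group_add,finite} \<Rightarrow> real"
  shows "(\<Sum>\<gamma>\<in>characters. norm (fourier g \<gamma>) * norm (fourier h \<gamma>)) \<le>
    card (characters :: ('a \<Rightarrow> complex) set) * (sqrt (\<Sum>x\<in>UNIV. (g x)\<^sup>2) * sqrt (\<Sum>x\<in>UNIV. (h x)\<^sup>2))"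
proof (rule power2_le_imp_le)
  let ?M = "real (card (characters :: ('a \<Rightarrow> complex) set))"
  have "(\<Sum>\<gamma>\<in>characters. norm (fourier g \<gamma>) * norm (fourier h \<gamma>))\<^sup>2
     \<le> (\<Sum>\<gamma>\<in>characters. (norm (fourier g \<gamma>))\<^sup>2) * (\<Sum>\<gamma>\<in>characters. (norm (fourier h \<gamma>))\<^sup>2)"
    by (rule Cauchy_Schwarz_ineq_sum)
  also have "\<dots> = (?M * (sqrt (\<Sum>x\<in>UNIV. (g x)\<^sup>2) * sqrt (\<Sum>x\<in>UNIV. (h x)\<^sup>2)))\<^sup>2"
    unfolding parseval power_mult_distrib real_sqrt_pow2[OF sum_nonneg[OF zero_le_power2]]
    by (simp add: power2_eq_square)
  finally show "(\<Sum>\<gamma>\<in>characters. norm (fourier g \<gamma>) * norm (fourier h \<gamma>))\<^sup>2 \<le> \<dots>" .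
qed (simp add: sum_nonneg)

lemma norm_fourier_le:
  assumes "\<gamma> \<in> characters"
  shows "norm (fourier f \<gamma>) \<le> (\<Sum>x\<in>UNIV. \<bar>f x\<bar>)"
proof -
  have "norm (fourier f \<gamma>) \<le> (\<Sum>x\<in>UNIV. norm (complex_of_real (f x) * \<gamma> x))"
    unfolding fourier_def by (rule norm_sum)
  also have "\<dots> = (\<Sum>x\<in>UNIV. \<bar>f x\<bar>)"
    using assms by (simp add: norm_mult norm_character characters_def)
  finally show ?thesis .
qed

lemma prod_Icc_ends:
  "2 \<le> k \<Longrightarrow> (\<Prod>i\<in>{1..k}. F i) = F 1 * F k * (\<Prod>i\<in>{2..k-1}. F i)"
  for F :: "nat \<Rightarrow> 'b::comm_monoid_mult"
proof -
  assume "2 \<le> k"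
  then have "{1..k} = insert 1 (insert k {2..k-1})" "1 \<notin> insert k {2..k-1}" "k \<notin> {2..k-1}"
    by auto
  then show ?thesis by (simp add: mult.assoc)
qed

lemma Tform_eq_fourier_ends:
  fixes g :: "nat \<Rightarrow> 'a::{ab_group_add,finite} \<Rightarrow> real"
  assumes "2 \<le> k"
  shows "complex_of_real (Tform k g) =
    (\<Sum>\<gamma>\<in>characters. fourier (g 1) \<gamma> * fourier (g k) \<gamma> * (\<Prod>i\<in>{2..k-1}. fourier (g i) \<gamma>))
      / of_nat (card (characters :: ('a \<Rightarrow> complex) set))"
  unfolding Tform_eq_fourier prod_Icc_ends[OF assms] ..

lemma Tform_replace_middle:
  fixes g h :: "nat \<Rightarrow> 'a::{ab_group_add,finite} \<Rightarrow> real"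
  assumes k: "2 \<le> k" and "0 \<le> \<epsilon>" and ends: "g 1 = h 1" "g k = h k"
    and g: "\<And>i \<gamma>. i \<in> {2..k-1} \<Longrightarrow> \<gamma> \<in> characters \<Longrightarrow> norm (fourier (g i) \<gamma>) \<le> 1"
    and h: "\<And>i \<gamma>. i \<in> {2..k-1} \<Longrightarrow> \<gamma> \<in> characters \<Longrightarrow> norm (fourier (h i) \<gamma>) \<le> 1"
    and close: "\<And>i \<gamma>. i \<in> {2..k-1} \<Longrightarrow> \<gamma> \<in> characters \<Longrightarrow>
      norm (fourier (g i) \<gamma> - fourier (h i) \<gamma>) \<le> \<epsilon>"
  shows "\<bar>Tform k g - Tform k h\<bar> \<le>
    real (k - 2) * \<epsilon> * (sqrt (\<Sum>x\<in>UNIV. (g 1 x)\<^sup>2) * sqrt (\<Sum>x\<in>UNIV. (g k x)\<^sup>2))"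
proof -
  let ?M = "card (characters :: ('a \<Rightarrow> complex) set)"
  let ?D = "\<lambda>\<gamma>. (\<Prod>i\<in>{2..k-1}. fourier (g i) \<gamma>) - (\<Prod>i\<in>{2..k-1}. fourier (h i) \<gamma>)"
  have D: "norm (?D \<gamma>) \<le> (k - 2) * \<epsilon>" if "\<gamma> \<in> characters" for \<gamma>
  proof -
    have "norm (?D \<gamma>) \<le> (\<Sum>i\<in>{2..k-1}. norm (fourier (g i) \<gamma> - fourier (h i) \<gamma>))"
      using g h that by (intro norm_prod_diff) auto
    also have "\<dots> \<le> (\<Sum>i\<in>{2..k-1}. \<epsilon>)" using close that by (intro sum_mono) auto
    finally show ?thesis using k by simp
  qed
  have "complex_of_real (Tform k g - Tform k h) =
      (\<Sum>\<gamma>\<in>characters. fourier (g 1) \<gamma> * fourier (g k) \<gamma> * ?D \<gamma>) / of_nat ?M"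
    unfolding of_real_diff Tform_eq_fourier_ends[OF k] ends
    by (simp add: diff_divide_distrib sum_subtractf right_diff_distrib)
  then have "\<bar>Tform k g - Tform k h\<bar> =
      norm ((\<Sum>\<gamma>\<in>characters. fourier (g 1) \<gamma> * fourier (g k) \<gamma> * ?D \<gamma>) / of_nat ?M)"
    by (simp only: norm_of_real flip: \<open>complex_of_real _ = _\<close>)
  also have "\<dots> = norm (\<Sum>\<gamma>\<in>characters. fourier (g 1) \<gamma> * fourier (g k) \<gamma> * ?D \<gamma>) / ?M"
    by (simp only: norm_divide norm_of_nat)
  also have "\<dots> \<le> (\<Sum>\<gamma>\<in>characters. norm (fourier (g 1) \<gamma>) * norm (fourier (g k) \<gamma>) * ((k - 2) * \<epsilon>)) / ?M"
  proof (intro divide_right_mono order_trans[OF norm_sum] sum_mono)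
    fix \<gamma> :: "'a \<Rightarrow> complex" assume "\<gamma> \<in> characters"
    then show "norm (fourier (g 1) \<gamma> * fourier (g k) \<gamma> * ?D \<gamma>) \<le>
        norm (fourier (g 1) \<gamma>) * norm (fourier (g k) \<gamma>) * ((k - 2) * \<epsilon>)"
      unfolding norm_mult by (intro mult_left_mono D) auto
  qed simp
  also have "\<dots> = (k - 2) * \<epsilon> * ((\<Sum>\<gamma>\<in>characters. norm (fourier (g 1) \<gamma>) * norm (fourier (g k) \<gamma>)) / ?M)"
    by (simp add: sum_distrib_left sum_divide_distrib mult_ac)
  also have "\<dots> \<le> (k - 2) * \<epsilon> * (sqrt (\<Sum>x\<in>UNIV. (g 1 x)\<^sup>2) * sqrt (\<Sum>x\<in>UNIV. (g k x)\<^sup>2))"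
    using sum_norm_fourier_mult_le[of "g 1" "g k"] card_characters_pos[where 'a='a] \<open>0 \<le> \<epsilon>\<close>
    by (intro mult_left_mono) (simp_all add: divide_le_eq mult_ac)
  finally show ?thesis .
qed


section \<open>The Bohr norm and the smoothed Bohr densities\<close>

lemma abs_Arg_mult_le:
  assumes "w \<noteq> 0" "z \<noteq> 0"
  shows "\<bar>Arg (w * z)\<bar> \<le> \<bar>Arg w\<bar> + \<bar>Arg z\<bar>"
proof -
  define s where "s = Arg w + Arg z"
  have "Arg (w * z) = s + (if s \<in> {-pi<..pi} then 0 else if s > pi then -2*pi else 2*pi)"
    using Arg_times'[OF assms] by (simp add: s_def)
  moreover have "\<bar>Arg (w * z)\<bar> \<le> pi" using Arg_bounded[of "w * z"] by auto
  ultimately show ?thesis unfolding s_def by (auto split: if_splits)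
qed

lemma Arg_le_gnorm: "finite \<Gamma> \<Longrightarrow> \<gamma> \<in> \<Gamma> \<Longrightarrow> \<bar>Arg (\<gamma> x)\<bar> / (2 * pi) \<le> gnorm \<Gamma> x"
  by (auto simp: gnorm_def intro!: Max_ge)

lemma gnorm_leI:
  "finite \<Gamma> \<Longrightarrow> 0 \<le> t \<Longrightarrow> (\<And>\<gamma>. \<gamma> \<in> \<Gamma> \<Longrightarrow> \<bar>Arg (\<gamma> x)\<bar> / (2 * pi) \<le> t) \<Longrightarrow> gnorm \<Gamma> x \<le> t"
  by (auto simp: gnorm_def)

lemma gnorm_nonneg: "finite \<Gamma> \<Longrightarrow> 0 \<le> gnorm \<Gamma> x"
proof (cases "\<Gamma> = {}")
  case False
  assume "finite \<Gamma>"
  then obtain \<gamma> where "\<gamma> \<in> \<Gamma>" using False by auto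
  moreover have "0 \<le> \<bar>Arg (\<gamma> x)\<bar> / (2 * pi)" by simp
  ultimately show ?thesis using Arg_le_gnorm[OF \<open>finite \<Gamma>\<close>, of \<gamma> x] by linarith
qed (simp add: gnorm_def)

lemma gnorm_le_half: "finite \<Gamma> \<Longrightarrow> gnorm \<Gamma> x \<le> 1 / 2"
proof (rule gnorm_leI)
  fix \<gamma> :: "'a \<Rightarrow> complex"
  have "\<bar>Arg (\<gamma> x)\<bar> \<le> pi" using Arg_bounded[of "\<gamma> x"] by auto
  then show "\<bar>Arg (\<gamma> x)\<bar> / (2 * pi) \<le> 1 / 2" by (simp add: divide_le_eq)
qed auto

lemma gnorm_0: "finite \<Gamma> \<Longrightarrow> \<Gamma> \<subseteq> characters \<Longrightarrow> gnorm \<Gamma> 0 = 0"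
  by (intro antisym gnorm_leI gnorm_nonneg) (auto simp: characters_def character_0)

lemma gnorm_add_le:
  assumes "finite \<Gamma>" "\<Gamma> \<subseteq> characters"
  shows "gnorm \<Gamma> (x + y) \<le> gnorm \<Gamma> x + gnorm \<Gamma> y"
proof (rule gnorm_leI[OF assms(1)])
  show "0 \<le> gnorm \<Gamma> x + gnorm \<Gamma> y" using gnorm_nonneg[OF assms(1)] by simp
  fix \<gamma> assume "\<gamma> \<in> \<Gamma>"
  then have "character \<gamma>" using assms by (auto simp: characters_def)
  then have "\<bar>Arg (\<gamma> (x + y))\<bar> \<le> \<bar>Arg (\<gamma> x)\<bar> + \<bar>Arg (\<gamma> y)\<bar>"
    by (simp add: character_add character_nonzero abs_Arg_mult_le)
  then have "\<bar>Arg (\<gamma> (x + y))\<bar> / (2 * pi) \<le> \<bar>Arg (\<gamma> x)\<bar> / (2 * pi) + \<bar>Arg (\<gamma> y)\<bar> / (2 * pi)"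
    by (simp add: add_divide_distrib[symmetric] divide_right_mono)
  also have "\<dots> \<le> gnorm \<Gamma> x + gnorm \<Gamma> y"
    using Arg_le_gnorm[OF assms(1) \<open>\<gamma> \<in> \<Gamma>\<close>] by (intro add_mono)
  finally show "\<bar>Arg (\<gamma> (x + y))\<bar> / (2 * pi) \<le> gnorm \<Gamma> x + gnorm \<Gamma> y" .
qed

lemma gnorm_uminus:
  assumes "\<Gamma> \<subseteq> characters"
  shows "gnorm \<Gamma> (- x) = gnorm \<Gamma> x"
proof -
  have "\<bar>Arg (\<gamma> (- x))\<bar> = \<bar>Arg (\<gamma> x)\<bar>" if "\<gamma> \<in> \<Gamma>" for \<gamma>
    using assms that by (auto simp: characters_def character_uminus Arg_cnj)
  then show ?thesis unfolding gnorm_def by (simp cong: image_cong)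
qed

lemma bohr_smooth_eq_exp:
  assumes "0 < \<delta>" "0 \<le> gnorm \<Gamma> x"
  shows "bohr_smooth \<Gamma> \<delta> x = exp (- gnorm \<Gamma> x / \<delta>)"
proof -
  define g where "g = gnorm \<Gamma> x"
  define f where "f = (\<lambda>t::real. (1 / \<delta>) * exp (- t / \<delta>))"
  have hi: "(f has_integral exp (- g / \<delta>)) {g..}"
    using has_integral_mult_right[OF has_integral_exp_minus_to_infinity[of "1 / \<delta>" g], of "1 / \<delta>"] assms
    by (simp add: f_def field_simps)
  have "f absolutely_integrable_on {g..}"
    using hi assms(1) by (intro nonnegative_absolutely_integrable_1) (auto simp: integrable_on_def f_def)
  moreover have "(\<lambda>t. indicator {g..} t *\<^sub>R f t) \<in> borel_measurable lborel"
    unfolding f_def by measurable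
  ultimately have "set_integrable lborel {g..} f"
    unfolding set_integrable_def by (metis integrable_completion)
  have "bohr_smooth \<Gamma> \<delta> x = (LINT t:{g..}|lborel. f t)"
    unfolding bohr_smooth_def set_lebesgue_integral_def
    using assms(2) by (intro Bochner_Integration.integral_cong) (auto simp: indicator_def bohr_def f_def g_def)
  also have "\<dots> = integral {g..} f"
    using set_borel_integral_eq_integral(2)[OF \<open>set_integrable lborel {g..} f\<close>] .
  also have "\<dots> = exp (- g / \<delta>)" using hi by (rule integral_unique)
  finally show ?thesis by (simp add: g_def)
qed

definition density :: "('a::finite \<Rightarrow> real) \<Rightarrow> bool" where
  "density p \<longleftrightarrow> (\<forall>x. 0 \<le> p x) \<and> (\<Sum>x\<in>UNIV. p x) = 1"

lemma density_nonneg: "density p \<Longrightarrow> 0 \<le> p x"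
  by (simp add: density_def)

lemma density_sum: "density p \<Longrightarrow> (\<Sum>x\<in>UNIV. p x) = 1"
  by (simp add: density_def)

lemma sum_translate: "(\<Sum>x\<in>UNIV. f (x + a)) = (\<Sum>x\<in>UNIV. f x)"
  for a :: "'a::{ab_group_add,finite}"
  by (rule sum.reindex_bij_witness[of _ "\<lambda>x. x - a" "\<lambda>x. x + a"]) auto

lemma sum_reflect: "(\<Sum>x\<in>UNIV. f (a - x)) = (\<Sum>x\<in>UNIV. f x)"
  for a :: "'a::{ab_group_add,finite}"
  by (rule sum.reindex_bij_witness[of _ "\<lambda>x. a - x" "\<lambda>x. a - x"]) auto

lemma density_conv:
  fixes p q :: "'a::{ab_group_add,finite} \<Rightarrow> real"
  assumes "density p" "density q"
  shows "density (conv p q)"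
proof -
  have "(\<Sum>x\<in>UNIV. conv p q x) = (\<Sum>y\<in>UNIV. p y * (\<Sum>x\<in>UNIV. q (x - y)))"
    unfolding conv_def by (subst sum.swap) (simp add: sum_distrib_left)
  also have "\<dots> = 1"
    using assms sum_translate[of q "- y" for y] by (simp add: density_def)
  finally show ?thesis
    using assms by (auto simp: density_def conv_def intro!: sum_nonneg)
qed

lemma conv_bounded:
  fixes g q :: "'a::{ab_group_add,finite} \<Rightarrow> real"
  assumes q: "density q" and g: "\<And>x. 0 \<le> g x" "\<And>x. g x \<le> 1"
  shows "0 \<le> conv g q x" "conv g q x \<le> 1"
proof -
  have "conv g q x \<le> (\<Sum>z\<in>UNIV. q (x - z))"
    unfolding conv_def using g density_nonneg[OF q] by (intro sum_mono) (simp add: mult_left_le_one_le)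
  then show "conv g q x \<le> 1" using sum_reflect[of q x] density_sum[OF q] by simp
  show "0 \<le> conv g q x" unfolding conv_def using g density_nonneg[OF q] by (simp add: sum_nonneg)
qed

lemma conv_uminus:
  fixes p q :: "'a::{ab_group_add,finite} \<Rightarrow> real"
  assumes "\<And>x. p (- x) = p x" "\<And>x. q (- x) = q x"
  shows "conv p q (- x) = conv p q x"
proof -
  have "conv p q (- x) = (\<Sum>y\<in>UNIV. p (- y) * q (- x - - y))"
    unfolding conv_def by (rule sum.reindex_bij_witness[of _ uminus uminus]) auto
  also have "\<dots> = conv p q x"
    unfolding conv_def using assms by (metis minus_diff_minus)
  finally show ?thesis .
qed

lemma conv_translate_ge:
  assumes "\<And>x. 0 \<le> q x" "\<And>y. e * p y \<le> p (y + w)"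
  shows "e * conv q p y \<le> conv q p (y + w)"
  unfolding conv_def sum_distrib_left
proof (rule sum_mono)
  fix u
  have "e * p (y - u) \<le> p (y + w - u)" using assms(2)[of "y - u"] by (simp add: algebra_simps)
  then show "e * (q u * p (y - u)) \<le> q u * p (y + w - u)"
    using assms(1)[of u] by (metis mult.left_commute mult_left_mono)
qed

lemma conv_conv_eq: "conv g (conv \<Psi> q) x = (\<Sum>w\<in>UNIV. \<Psi> w * conv g q (x - w))"
  for g \<Psi> q :: "'a::{ab_group_add,finite} \<Rightarrow> real"
  unfolding conv_def sum_distrib_left
  by (subst sum.swap) (simp add: diff_diff_eq add.commute mult.left_commute)

lemma beta_eq:
  assumes "finite \<Gamma>" "0 < \<delta>"
  shows "beta \<Gamma> \<delta> x = exp (- gnorm \<Gamma> x / \<delta>) / (\<Sum>y\<in>UNIV. exp (- gnorm \<Gamma> y / \<delta>))"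
  unfolding beta_def using bohr_smooth_eq_exp[OF assms(2) gnorm_nonneg[OF assms(1)]] by simp

lemma
  assumes "finite \<Gamma>" "\<Gamma> \<subseteq> characters" "0 < \<delta>"
  shows density_beta: "density (beta \<Gamma> \<delta>)"
    and beta_uminus: "beta \<Gamma> \<delta> (- x) = beta \<Gamma> \<delta> x"
  using assms sum_pos[of UNIV "\<lambda>y. exp (- gnorm \<Gamma> y / \<delta>)"]
  by (auto simp: density_def beta_eq gnorm_uminus sum_divide_distrib[symmetric])

lemma beta_translate_ge:
  assumes "finite \<Gamma>" "\<Gamma> \<subseteq> characters" "0 < \<delta>"
  shows "exp (- gnorm \<Gamma> w / \<delta>) * beta \<Gamma> \<delta> y \<le> beta \<Gamma> \<delta> (y + w)"
proof -
  have "gnorm \<Gamma> (y + w) / \<delta> \<le> gnorm \<Gamma> w / \<delta> + gnorm \<Gamma> y / \<delta>"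
    using gnorm_add_le[OF assms(1,2), of y w] assms(3) by (simp add: field_simps)
  then have "exp (- gnorm \<Gamma> w / \<delta>) * exp (- gnorm \<Gamma> y / \<delta>) \<le> exp (- gnorm \<Gamma> (y + w) / \<delta>)"
    by (simp add: exp_add[symmetric])
  then show ?thesis
    using assms sum_pos[of UNIV "\<lambda>y. exp (- gnorm \<Gamma> y / \<delta>)"]
    by (simp add: beta_eq divide_right_mono)
qed

lemma
  assumes "finite \<Gamma>" "\<Gamma> \<subseteq> characters" "\<Gamma> = {} \<or> 0 < \<delta>"
  shows density_psi: "density (psi \<Gamma> \<delta>)"
    and psi_uminus: "psi \<Gamma> \<delta> (- x) = psi \<Gamma> \<delta> x"
proof -
  show "density (psi \<Gamma> \<delta>)"
  proof (cases "\<Gamma> = {}")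
    case False
    then show ?thesis
      using assms density_conv[OF density_beta density_beta, of \<Gamma> \<delta> \<Gamma> \<delta>] by (simp add: psi_def)
  qed (simp add: psi_def density_def)
  show "psi \<Gamma> \<delta> (- x) = psi \<Gamma> \<delta> x"
  proof (cases "\<Gamma> = {}")
    case False
    then have "0 < \<delta>" using assms(3) by simp
    have "\<And>x. beta \<Gamma> \<delta> (- x) = beta \<Gamma> \<delta> x" using beta_uminus[OF assms(1,2) \<open>0 < \<delta>\<close>] .
    with False show ?thesis by (simp add: psi_def conv_uminus[of "beta \<Gamma> \<delta>" "beta \<Gamma> \<delta>"])
  qed (simp add: psi_def)
qed

lemma psi_translate_ge:
  assumes "finite \<Gamma>" "\<Gamma> \<subseteq> characters" "0 < \<delta>"
  shows "exp (- gnorm \<Gamma> w / \<delta>) * psi \<Gamma> \<delta> y \<le> psi \<Gamma> \<delta> (y + w)"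
proof (cases "\<Gamma> = {}")
  case False
  have "\<And>x. 0 \<le> beta \<Gamma> \<delta> x" using density_nonneg[OF density_beta[OF assms]] .
  moreover have "\<And>y. exp (- gnorm \<Gamma> w / \<delta>) * beta \<Gamma> \<delta> y \<le> beta \<Gamma> \<delta> (y + w)"
    using beta_translate_ge[OF assms] .
  ultimately show ?thesis
    unfolding psi_def if_not_P[OF False] by (rule conv_translate_ge)
qed (simp add: psi_def gnorm_def)

lemma sum_abs_translate_diff_le:
  fixes p :: "'a::{ab_group_add,finite} \<Rightarrow> real"
  assumes p: "density p" and shift: "\<And>y. e * p y \<le> p (y + w)" and "e \<le> 1"
  shows "(\<Sum>y\<in>UNIV. \<bar>p (y + w) - p y\<bar>) \<le> 2 * (1 - e)"
proof -
  have "\<bar>p (y + w) - p y\<bar> = (p (y + w) - p y) + 2 * max (p y - p (y + w)) 0" for y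
    by (cases "p y \<le> p (y + w)") (auto simp: max_def)
  then have "(\<Sum>y\<in>UNIV. \<bar>p (y + w) - p y\<bar>) =
      (\<Sum>y\<in>UNIV. p (y + w)) - (\<Sum>y\<in>UNIV. p y) + 2 * (\<Sum>y\<in>UNIV. max (p y - p (y + w)) 0)"
    by (simp add: sum.distrib sum_subtractf sum_distrib_left)
  also have "\<dots> = 2 * (\<Sum>y\<in>UNIV. max (p y - p (y + w)) 0)"
    using sum_translate[of p w] by simp
  also have "\<dots> \<le> 2 * (\<Sum>y\<in>UNIV. (1 - e) * p y)"
  proof (intro mult_left_mono sum_mono)
    fix y
    have "0 \<le> (1 - e) * p y" using density_nonneg[OF p] \<open>e \<le> 1\<close> by simp
    moreover have "p y - p (y + w) \<le> (1 - e) * p y" using shift[of y] by (simp add: algebra_simps)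
    ultimately show "max (p y - p (y + w)) 0 \<le> (1 - e) * p y" by simp
  qed simp
  also have "\<dots> = 2 * (1 - e)"
    using density_sum[OF p] by (simp add: sum_distrib_left[symmetric])
  finally show ?thesis .
qed

definition shift_defect :: "('a::{ab_group_add,finite} \<Rightarrow> complex) set \<Rightarrow> real \<Rightarrow> 'a \<Rightarrow> real" where
  "shift_defect \<Gamma> \<eta> w = 1 - exp (- gnorm \<Gamma> w / \<eta>)"

lemma sum_abs_psi_translate_diff_le:
  assumes "finite \<Gamma>" "\<Gamma> \<subseteq> characters" "0 < \<eta>"
  shows "(\<Sum>y\<in>UNIV. \<bar>psi \<Gamma> \<eta> (y + w) - psi \<Gamma> \<eta> y\<bar>) \<le> 2 * shift_defect \<Gamma> \<eta> w"
  unfolding shift_defect_def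
  using assms gnorm_nonneg[OF assms(1), of w]
  by (intro sum_abs_translate_diff_le density_psi psi_translate_ge) auto

lemma shift_defect_0: "finite \<Gamma> \<Longrightarrow> \<Gamma> \<subseteq> characters \<Longrightarrow> shift_defect \<Gamma> \<eta> 0 = 0"
  by (simp add: shift_defect_def gnorm_0)

lemma shift_defect_empty: "shift_defect {} \<eta> w = 0"
  by (simp add: shift_defect_def gnorm_def)

lemma shift_defect_add_le:
  assumes "finite \<Gamma>" "\<Gamma> \<subseteq> characters" "0 < \<eta>"
  shows "shift_defect \<Gamma> \<eta> (u + w) \<le> shift_defect \<Gamma> \<eta> u + shift_defect \<Gamma> \<eta> w"
proof -
  define a where "a = exp (- gnorm \<Gamma> u / \<eta>)"
  define b where "b = exp (- gnorm \<Gamma> w / \<eta>)"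
  have "a \<le> 1" "b \<le> 1"
    using gnorm_nonneg[OF assms(1)] assms(3) by (auto simp: a_def b_def)
  have "gnorm \<Gamma> (u + w) / \<eta> \<le> gnorm \<Gamma> u / \<eta> + gnorm \<Gamma> w / \<eta>"
    using gnorm_add_le[OF assms(1,2)] assms(3) by (simp add: add_divide_distrib[symmetric] divide_right_mono)
  then have "a * b \<le> exp (- gnorm \<Gamma> (u + w) / \<eta>)"
    by (simp add: a_def b_def exp_add[symmetric])
  moreover have "0 \<le> (1 - a) * (1 - b)"
    using \<open>a \<le> 1\<close> \<open>b \<le> 1\<close> by simp
  ultimately show ?thesis
    unfolding shift_defect_def a_def[symmetric] b_def[symmetric] by (simp add: algebra_simps)
qed

definition expect :: "('a::finite \<Rightarrow> real) \<Rightarrow> ('a \<Rightarrow> real) \<Rightarrow> real" where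
  "expect p f = (\<Sum>w\<in>UNIV. p w * f w)"

lemma expect_conv_le:
  fixes p q :: "'a::{ab_group_add,finite} \<Rightarrow> real"
  assumes p: "density p" and q: "density q" and f: "\<And>u w. f (u + w) \<le> f u + f w"
  shows "expect (conv p q) f \<le> expect p f + expect q f"
proof -
  have "expect (conv p q) f = (\<Sum>u\<in>UNIV. \<Sum>v\<in>UNIV. p u * q (v - u) * f v)"
    unfolding expect_def conv_def by (subst sum.swap) (simp add: sum_distrib_right)
  also have "\<dots> = (\<Sum>u\<in>UNIV. \<Sum>t\<in>UNIV. p u * q t * f (u + t))"
  proof (rule sum.cong[OF refl])
    fix u
    show "(\<Sum>v\<in>UNIV. p u * q (v - u) * f v) = (\<Sum>t\<in>UNIV. p u * q t * f (u + t))"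
      by (rule sum.reindex_bij_witness[of _ "\<lambda>t. u + t" "\<lambda>v. v - u"]) auto
  qed
  also have "\<dots> \<le> (\<Sum>u\<in>UNIV. \<Sum>t\<in>UNIV. p u * q t * (f u + f t))"
    using f density_nonneg[OF p] density_nonneg[OF q] by (intro sum_mono mult_left_mono) auto
  also have "\<dots> = (\<Sum>u\<in>UNIV. p u * f u * (\<Sum>t\<in>UNIV. q t)) + (\<Sum>u\<in>UNIV. p u * (\<Sum>t\<in>UNIV. q t * f t))"
    by (simp add: algebra_simps sum.distrib sum_distrib_left sum_distrib_right)
  also have "\<dots> = expect p f + expect q f"
    using density_sum[OF p] density_sum[OF q] by (simp add: expect_def sum_distrib_right[symmetric])
  finally show ?thesis .
qed

lemma expect_mono: "density p \<Longrightarrow> (\<And>w. f w \<le> g w) \<Longrightarrow> expect p f \<le> expect p g"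
  unfolding expect_def by (intro sum_mono mult_left_mono) (auto simp: density_nonneg)

lemma expect_bounded:
  assumes p: "density p" and f: "\<And>x. 0 \<le> f x" "\<And>x. f x \<le> 1"
  shows "0 \<le> expect p f" "expect p f \<le> 1"
proof -
  have "expect p f \<le> (\<Sum>z\<in>UNIV. p z)"
    unfolding expect_def using f density_nonneg[OF p] by (intro sum_mono) (simp add: mult_right_le_one_le)
  then show "expect p f \<le> 1" using density_sum[OF p] by simp
  show "0 \<le> expect p f" unfolding expect_def using f density_nonneg[OF p] by (simp add: sum_nonneg)
qed

primrec conv_pow :: "('a::{ab_group_add,finite} \<Rightarrow> real) \<Rightarrow> nat \<Rightarrow> 'a \<Rightarrow> real" where
  "conv_pow p 0 = (\<lambda>w. if w = 0 then 1 else 0)"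
| "conv_pow p (Suc j) = conv (conv_pow p j) p"

lemma density_conv_pow: "density p \<Longrightarrow> density (conv_pow p j)"
proof (induction j)
  case 0
  have "(\<Sum>x\<in>UNIV. conv_pow p 0 x) = 1" by simp
  then show ?case by (simp add: density_def)
qed (simp add: density_conv)

lemma expect_conv_pow_le:
  assumes "density p" and "\<And>u w. f (u + w) \<le> f u + f w" and "f 0 = 0"
  shows "expect (conv_pow p j) f \<le> j * expect p f"
proof (induction j)
  case 0
  have "expect (conv_pow p 0) f = (\<Sum>w\<in>UNIV. if w = 0 then f w else 0)"
    unfolding expect_def by (intro sum.cong refl) auto
  then show ?case using assms(3) by simp
next
  case (Suc j)
  have "expect (conv (conv_pow p j) p) f \<le> expect (conv_pow p j) f + expect p f"
    by (rule expect_conv_le[OF density_conv_pow[OF assms(1)] assms(1), of f]) (rule assms(2))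
  with Suc show ?case by (simp add: algebra_simps)
qed

lemma fourier_conv_pow:
  assumes "\<gamma> \<in> characters"
  shows "fourier (conv_pow p j) \<gamma> = fourier p \<gamma> ^ j"
proof (induction j)
  case 0
  have "fourier (conv_pow p 0) \<gamma> = (\<Sum>x\<in>UNIV. if x = 0 then \<gamma> x else 0)"
    unfolding fourier_def by (intro sum.cong refl) auto
  then have "fourier (conv_pow p 0) \<gamma> = \<gamma> 0" by simp
  then show ?case using assms by (simp add: characters_def character_0)
next
  case (Suc j)
  then show ?case by (simp add: fourier_conv[OF assms])
qed


section \<open>Concentration of the smoothed Bohr densities\<close>

definition partition_fun :: "('a::finite \<Rightarrow> real) \<Rightarrow> real \<Rightarrow> real" where
  "partition_fun t c = (\<Sum>n\<in>UNIV. exp (- c * t n))"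

lemma partition_fun_pos: "0 < partition_fun t c"
  unfolding partition_fun_def by (intro sum_pos) auto

lemma partition_fun_antimono:
  "(\<And>n. 0 \<le> t n) \<Longrightarrow> c1 \<le> c2 \<Longrightarrow> partition_fun t c2 \<le> partition_fun t c1"
  unfolding partition_fun_def by (intro sum_mono) (simp add: mult_right_mono)

lemma partition_fun_log_convex:
  "(partition_fun t c)\<^sup>2 \<le> partition_fun t (c - h) * partition_fun t (c + h)"
proof -
  have "(partition_fun t c)\<^sup>2 = (\<Sum>n\<in>UNIV. exp (- (c - h) * t n / 2) * exp (- (c + h) * t n / 2))\<^sup>2"
    unfolding partition_fun_def by (simp add: exp_add[symmetric] algebra_simps add_divide_distrib[symmetric])
  also have "\<dots> \<le> (\<Sum>n\<in>UNIV. (exp (- (c - h) * t n / 2))\<^sup>2) * (\<Sum>n\<in>UNIV. (exp (- (c + h) * t n / 2))\<^sup>2)"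
    by (rule Cauchy_Schwarz_ineq_sum)
  also have "\<dots> = partition_fun t (c - h) * partition_fun t (c + h)"
    unfolding partition_fun_def
    by (simp add: exp_double[symmetric] power2_eq_square exp_add[symmetric] mult.commute)
  finally show ?thesis .
qed

lemma partition_fun_ratio_mono:
  "partition_fun t c / partition_fun t (c - h) \<le> partition_fun t (c + h) / partition_fun t c"
  using partition_fun_log_convex[of t c h] partition_fun_pos[of t]
  by (simp add: divide_simps power2_eq_square mult.commute)

lemma partition_fun_telescope:
  fixes t :: "'a::finite \<Rightarrow> real" and lam \<mu> :: real
  defines "r \<equiv> partition_fun t (lam + \<mu>) / partition_fun t lam"
  shows "partition_fun t lam \<le> r ^ m * partition_fun t (lam - m * \<mu>)"
proof (induction m)
  case (Suc m)
  have ratio: "partition_fun t (lam - j * \<mu>) / partition_fun t (lam - (j + 1) * \<mu>) \<le> r" for j :: nat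
  proof (induction j)
    case (Suc j)
    have "partition_fun t (lam - (Suc j) * \<mu>) / partition_fun t (lam - (Suc j + 1) * \<mu>)
        \<le> partition_fun t (lam - j * \<mu>) / partition_fun t (lam - (j + 1) * \<mu>)"
      using partition_fun_ratio_mono[of t "lam - (j + 1) * \<mu>" \<mu>] by (simp add: algebra_simps)
    with Suc show ?case by simp
  qed (simp add: r_def partition_fun_ratio_mono)
  have "partition_fun t (lam - m * \<mu>) \<le> r * partition_fun t (lam - (Suc m) * \<mu>)"
    using ratio[of m] partition_fun_pos[of t "lam - (Suc m) * \<mu>"] by (simp add: divide_le_eq algebra_simps)
  moreover have "0 \<le> r" using partition_fun_pos[of t] by (simp add: r_def less_imp_le)
  ultimately have "r ^ m * partition_fun t (lam - m * \<mu>) \<le> r ^ m * (r * partition_fun t (lam - (Suc m) * \<mu>))"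
    by (intro mult_left_mono) auto
  then have "r ^ m * partition_fun t (lam - m * \<mu>) \<le> r ^ Suc m * partition_fun t (lam - (Suc m) * \<mu>)"
    by (simp add: mult_ac)
  with Suc show ?case by linarith
qed simp

lemma partition_fun_ratio_ge:
  fixes m :: nat and lam \<mu> :: real
  assumes t: "\<And>n. 0 \<le> t n" and "0 < \<mu>" "1 \<le> m" "m * \<mu> \<le> lam / 2"
    and K: "partition_fun t (lam / 2) \<le> K * partition_fun t lam" "0 < K"
  shows "1 - ln K / m \<le> partition_fun t (lam + \<mu>) / partition_fun t lam"
proof -
  define r where "r = partition_fun t (lam + \<mu>) / partition_fun t lam"
  have "0 < r" using partition_fun_pos[of t] by (simp add: r_def)
  have "partition_fun t lam \<le> r ^ m * partition_fun t (lam - m * \<mu>)"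
    unfolding r_def by (rule partition_fun_telescope)
  also have "\<dots> \<le> r ^ m * partition_fun t (lam / 2)"
    using assms(4) \<open>0 < r\<close> by (intro mult_left_mono partition_fun_antimono t) auto
  also have "\<dots> \<le> r ^ m * (K * partition_fun t lam)"
    using K \<open>0 < r\<close> by (intro mult_left_mono) auto
  finally have "1 \<le> r ^ m * K"
    using partition_fun_pos[of t lam] by (simp add: mult.assoc[symmetric])
  then have "- ln K / m \<le> ln r"
    using \<open>0 < r\<close> K(2) \<open>1 \<le> m\<close> ln_ge_zero[of "r ^ m * K"]
    by (simp add: ln_mult ln_realpow divide_simps add.commute mult.commute)
  then have "exp (- ln K / m) \<le> r"
    using \<open>0 < r\<close> by (metis exp_le_cancel_iff exp_ln)
  then show ?thesis
    using exp_ge_add_one_self[of "- ln K / m"] by (simp add: r_def)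
qed

lemma abs_Arg_le_Arg_mult_diff:
  assumes "w \<noteq> 0" "u \<noteq> 0" "\<bar>Arg (w * u) - Arg u\<bar> < pi"
  shows "\<bar>Arg w\<bar> \<le> \<bar>Arg (w * u) - Arg u\<bar>"
proof -
  define s where "s = Arg w + Arg u"
  have e: "Arg (w * u) = s + (if s \<in> {-pi<..pi} then 0 else if s > pi then -2*pi else 2*pi)"
    using Arg_times'[OF assms(1,2)] by (simp add: s_def)
  have bw: "- pi < Arg w" "Arg w \<le> pi" using Arg_bounded[of w] by auto
  consider "s \<in> {-pi<..pi}" | "s \<notin> {-pi<..pi}" "s > pi" | "s \<notin> {-pi<..pi}" "\<not> s > pi"
    by blast
  then show ?thesis
  proof cases
    case 1
    then show ?thesis using e by (simp add: s_def)
  next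
    case 2
    then have "Arg (w * u) - Arg u = Arg w - 2 * pi" using e by (simp add: s_def)
    then show ?thesis using assms(3) bw by auto
  next
    case 3
    then have "Arg (w * u) - Arg u = Arg w + 2 * pi" using e by (simp add: s_def)
    then show ?thesis using assms(3) bw by auto
  qed
qed

definition bohr_box :: "('a \<Rightarrow> complex) set \<Rightarrow> real \<Rightarrow> 'a \<Rightarrow> ('a \<Rightarrow> complex) \<Rightarrow> int" where
  "bohr_box \<Gamma> s n = restrict (\<lambda>\<gamma>. \<lfloor>Arg (\<gamma> n) / (2 * pi * s)\<rfloor>) \<Gamma>"

lemma gnorm_diff_le_if_bohr_box_eq:
  fixes n n' :: "'a::{ab_group_add,finite}"
  assumes fin: "finite \<Gamma>" and "\<Gamma> \<subseteq> characters" "0 < s" and box: "bohr_box \<Gamma> s n = bohr_box \<Gamma> s n'"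
  shows "gnorm \<Gamma> (n - n') \<le> s"
proof (cases "1 / 2 \<le> s")
  case True
  then show ?thesis using gnorm_le_half[OF fin, of "n - n'"] by linarith
next
  case False
  show ?thesis
  proof (rule gnorm_leI[OF fin])
    show "0 \<le> s" using \<open>0 < s\<close> by simp
    fix \<gamma> assume "\<gamma> \<in> \<Gamma>"
    then have c: "character \<gamma>" using assms by (auto simp: characters_def)
    define a where "a = Arg (\<gamma> n) / (2 * pi * s)"
    define a' where "a' = Arg (\<gamma> n') / (2 * pi * s)"
    have "\<lfloor>a\<rfloor> = \<lfloor>a'\<rfloor>"
      using fun_cong[OF box, of \<gamma>] \<open>\<gamma> \<in> \<Gamma>\<close> by (simp add: bohr_box_def a_def a'_def)
    then have "\<bar>a - a'\<bar> < 1" by linarith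
    moreover have "Arg (\<gamma> n) - Arg (\<gamma> n') = (2 * pi * s) * (a - a')"
      using \<open>0 < s\<close> by (simp add: a_def a'_def field_simps)
    ultimately have close: "\<bar>Arg (\<gamma> n) - Arg (\<gamma> n')\<bar> < 2 * pi * s"
      using \<open>0 < s\<close> by (simp add: abs_mult)
    have "2 * pi * s \<le> pi" using False by simp
    then have "\<bar>Arg (\<gamma> n) - Arg (\<gamma> n')\<bar> < pi" using close by linarith
    have split: "\<gamma> n = \<gamma> (n - n') * \<gamma> n'"
      using character_add[OF c, of "n - n'" n'] by simp
    have "\<bar>Arg (\<gamma> (n - n'))\<bar> \<le> \<bar>Arg (\<gamma> (n - n') * \<gamma> n') - Arg (\<gamma> n')\<bar>"
      using \<open>\<bar>Arg (\<gamma> n) - Arg (\<gamma> n')\<bar> < pi\<close> character_nonzero[OF c]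
      by (intro abs_Arg_le_Arg_mult_diff) (simp_all add: split[symmetric])
    also have "\<dots> = \<bar>Arg (\<gamma> n) - Arg (\<gamma> n')\<bar>" by (simp only: split[symmetric])
    finally show "\<bar>Arg (\<gamma> (n - n'))\<bar> / (2 * pi) \<le> s"
      using close by (simp add: divide_le_eq mult.commute)
  qed
qed

lemma card_bohr_box_fiber_le:
  fixes \<Gamma> :: "('a::{ab_group_add,finite} \<Rightarrow> complex) set"
  assumes "finite \<Gamma>" "\<Gamma> \<subseteq> characters" "0 < s"
  shows "card {n. bohr_box \<Gamma> s n = K} \<le> card (bohr \<Gamma> s)"
proof (cases "{n. bohr_box \<Gamma> s n = K} = {}")
  case False
  then obtain n0 where n0: "bohr_box \<Gamma> s n0 = K" by auto
  have "(\<lambda>n. n - n0) ` {n. bohr_box \<Gamma> s n = K} \<subseteq> bohr \<Gamma> s"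
    using gnorm_diff_le_if_bohr_box_eq[OF assms] n0 by (auto simp: bohr_def)
  moreover have "inj_on (\<lambda>n. n - n0) {n. bohr_box \<Gamma> s n = K}" by (auto simp: inj_on_def)
  ultimately show ?thesis by (intro card_inj_on_le) auto
qed simp

lemma bohr_box_le_gnorm:
  assumes "finite \<Gamma>" "\<gamma> \<in> \<Gamma>" "0 < s"
  shows "s * (\<bar>real_of_int (bohr_box \<Gamma> s n \<gamma>)\<bar> - 1) \<le> gnorm \<Gamma> n"
proof -
  define \<theta> where "\<theta> = Arg (\<gamma> n) / (2 * pi)"
  define K where "K = \<lfloor>\<theta> / s\<rfloor>"
  have K: "bohr_box \<Gamma> s n \<gamma> = K" using assms(2) by (simp add: bohr_box_def K_def \<theta>_def)
  have "real_of_int K \<le> \<theta> / s" "\<theta> / s < real_of_int K + 1"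
    unfolding K_def by linarith+
  then have "s * real_of_int K \<le> \<theta>" "\<theta> < s * (real_of_int K + 1)"
    using assms(3) by (simp_all add: field_simps)
  then have "s * (\<bar>real_of_int K\<bar> - 1) \<le> \<bar>\<theta>\<bar>"
    using assms(3) by (cases "K \<ge> 0") (auto simp: algebra_simps mult_nonneg_nonpos)
  also have "\<bar>\<theta>\<bar> \<le> gnorm \<Gamma> n" using Arg_le_gnorm[OF assms(1,2)] by (simp add: \<theta>_def)
  finally show ?thesis by (simp add: K)
qed

lemma bohr_box_mem_PiE:
  assumes "0 < s"
  shows "bohr_box \<Gamma> s n \<in> PiE \<Gamma> (\<lambda>_. {- int (nat \<lceil>1 / s\<rceil> + 1)..int (nat \<lceil>1 / s\<rceil> + 1)})"
proof -
  have "\<lfloor>Arg (\<gamma> n) / (2 * pi * s)\<rfloor> \<in> {- int (nat \<lceil>1 / s\<rceil> + 1)..int (nat \<lceil>1 / s\<rceil> + 1)}" for \<gamma>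
  proof -
    define a where "a = Arg (\<gamma> n) / (2 * pi * s)"
    define c where "c = \<lceil>1 / s\<rceil>"
    have "\<bar>Arg (\<gamma> n)\<bar> / (2 * pi) \<le> 1" using Arg_bounded[of "\<gamma> n"] by (simp add: abs_le_iff)
    then have "\<bar>a\<bar> \<le> 1 / s"
      using assms by (simp add: a_def divide_le_eq field_simps)
    moreover have "1 / s \<le> real_of_int c" by (simp add: c_def)
    ultimately have "- 1 - real_of_int c \<le> a" "a < 2 + real_of_int c" by linarith+
    moreover have "0 \<le> c" using assms unfolding c_def zero_le_ceiling
      by (metis divide_pos_pos less_trans neg_less_0_iff_less zero_less_one)
    ultimately show ?thesis unfolding a_def[symmetric] c_def[symmetric]
      by (simp add: le_floor_iff floor_le_iff)
  qed
  then show ?thesis by (auto simp: bohr_box_def)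
qed

lemma sum_exp_neg_abs_le_3: "(\<Sum>j\<in>{- int M..int M}. exp (- \<bar>real_of_int j\<bar>)) \<le> 3"
proof -
  have "(\<Sum>j\<in>{- int M..int M}. exp (- \<bar>real_of_int j\<bar>)) \<le> 3 - 2 * exp (- real M)"
  proof (induction M)
    case (Suc M)
    have "{- int (Suc M)..int (Suc M)} = insert (- int (Suc M)) (insert (int (Suc M)) {- int M..int M})"
      by auto
    then have "(\<Sum>j\<in>{- int (Suc M)..int (Suc M)}. exp (- \<bar>real_of_int j\<bar>)) =
        (\<Sum>j\<in>{- int M..int M}. exp (- \<bar>real_of_int j\<bar>)) + 2 * exp (- real (Suc M))"
      by simp
    moreover have "2 * exp (- real (Suc M)) \<le> exp 1 * exp (- real (Suc M))"
      using exp_ge_add_one_self[of 1] by (intro mult_right_mono) auto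
    moreover have "exp 1 * exp (- real (Suc M)) = exp (- real M)"
      by (simp add: exp_add[symmetric])
    ultimately show ?case using Suc by linarith
  qed simp
  then show ?thesis by (smt (verit) exp_gt_zero)
qed

lemma exp_gnorm_le_bohr_box_weight:
  assumes "finite \<Gamma>" "0 < s"
  shows "exp (- (card \<Gamma> / s) * gnorm \<Gamma> n) \<le>
    exp (card \<Gamma>) * (\<Prod>\<gamma>\<in>\<Gamma>. exp (- \<bar>real_of_int (bohr_box \<Gamma> s n \<gamma>)\<bar>))"
proof -
  have "(\<Sum>\<gamma>\<in>\<Gamma>. s * (\<bar>real_of_int (bohr_box \<Gamma> s n \<gamma>)\<bar> - 1)) \<le> (\<Sum>\<gamma>\<in>\<Gamma>. gnorm \<Gamma> n)"
    using bohr_box_le_gnorm[OF assms(1) _ assms(2)] by (intro sum_mono)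
  then have "s * ((\<Sum>\<gamma>\<in>\<Gamma>. \<bar>real_of_int (bohr_box \<Gamma> s n \<gamma>)\<bar>) - card \<Gamma>) \<le> card \<Gamma> * gnorm \<Gamma> n"
    by (simp add: sum_distrib_left[symmetric] sum_subtractf)
  then have "(\<Sum>\<gamma>\<in>\<Gamma>. \<bar>real_of_int (bohr_box \<Gamma> s n \<gamma>)\<bar>) - card \<Gamma> \<le> (card \<Gamma> / s) * gnorm \<Gamma> n"
    using assms(2) by (simp add: field_simps)
  then have "exp (- (card \<Gamma> / s) * gnorm \<Gamma> n) \<le> exp (card \<Gamma> + (\<Sum>\<gamma>\<in>\<Gamma>. - \<bar>real_of_int (bohr_box \<Gamma> s n \<gamma>)\<bar>))"
    by (simp add: sum_negf)
  also have "\<dots> = exp (card \<Gamma>) * (\<Prod>\<gamma>\<in>\<Gamma>. exp (- \<bar>real_of_int (bohr_box \<Gamma> s n \<gamma>)\<bar>))"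
    by (simp only: exp_add exp_sum[OF assms(1)])
  finally show ?thesis .
qed

lemma partition_fun_le_card_bohr:
  fixes \<Gamma> :: "('a::{ab_group_add,finite} \<Rightarrow> complex) set"
  assumes fin: "finite \<Gamma>" and "\<Gamma> \<subseteq> characters" "0 < s"
  shows "partition_fun (gnorm \<Gamma>) (card \<Gamma> / s) \<le> exp (card \<Gamma>) * 3 ^ card \<Gamma> * card (bohr \<Gamma> s)"
proof -
  define P where "P K = (\<Prod>\<gamma>\<in>\<Gamma>. exp (- \<bar>real_of_int (K \<gamma>)\<bar>))" for K :: "('a \<Rightarrow> complex) \<Rightarrow> int"
  define M where "M = nat \<lceil>1 / s\<rceil> + 1"
  define J where "J = {- int M..int M}"
  define B where "B = real (card (bohr \<Gamma> s))"
  have P0: "0 \<le> P K" for K unfolding P_def by (intro prod_nonneg) auto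
  have "partition_fun (gnorm \<Gamma>) (card \<Gamma> / s) \<le> (\<Sum>n\<in>UNIV. exp (card \<Gamma>) * P (bohr_box \<Gamma> s n))"
    unfolding partition_fun_def P_def using exp_gnorm_le_bohr_box_weight[OF fin \<open>0 < s\<close>]
    by (intro sum_mono) simp
  also have "\<dots> = exp (card \<Gamma>) * (\<Sum>K\<in>range (bohr_box \<Gamma> s). real (card {n. bohr_box \<Gamma> s n = K}) * P K)"
    by (simp add: sum_distrib_left[symmetric] sum.image_gen[of UNIV _ "bohr_box \<Gamma> s"])
  also have "\<dots> \<le> exp (card \<Gamma>) * (\<Sum>K\<in>range (bohr_box \<Gamma> s). B * P K)"
    using card_bohr_box_fiber_le[OF assms] P0 unfolding B_def
    by (intro mult_left_mono sum_mono mult_right_mono) auto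
  also have "\<dots> \<le> exp (card \<Gamma>) * (\<Sum>K\<in>PiE \<Gamma> (\<lambda>_. J). B * P K)"
  proof (intro mult_left_mono sum_mono2)
    show "range (bohr_box \<Gamma> s) \<subseteq> PiE \<Gamma> (\<lambda>_. J)"
      unfolding J_def M_def by (rule image_subsetI, rule bohr_box_mem_PiE[OF \<open>0 < s\<close>])
  qed (auto simp: B_def P0 fin J_def intro: finite_PiE)
  also have "\<dots> = exp (card \<Gamma>) * B * (\<Sum>K\<in>PiE \<Gamma> (\<lambda>_. J). P K)"
    by (simp add: sum_distrib_left mult.assoc)
  also have "\<dots> \<le> exp (card \<Gamma>) * B * 3 ^ card \<Gamma>"
  proof (rule mult_left_mono)
    have "(\<Sum>K\<in>PiE \<Gamma> (\<lambda>_. J). P K) = (\<Prod>\<gamma>\<in>\<Gamma>. \<Sum>j\<in>J. exp (- \<bar>real_of_int j\<bar>))"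
      unfolding P_def by (rule prod_sum_PiE[symmetric]) (use fin in \<open>auto simp: J_def\<close>)
    also have "\<dots> \<le> 3 ^ card \<Gamma>"
      using prod_mono[of \<Gamma> "\<lambda>_. \<Sum>j\<in>J. exp (- \<bar>real_of_int j\<bar>)" "\<lambda>_. 3"] sum_exp_neg_abs_le_3[of M]
      by (simp add: sum_nonneg J_def)
    finally show "(\<Sum>K\<in>PiE \<Gamma> (\<lambda>_. J). P K) \<le> 3 ^ card \<Gamma>" .
  qed (simp add: B_def)
  finally show ?thesis by (simp add: B_def mult_ac)
qed

lemma card_bohr_le_partition_fun:
  assumes "0 \<le> c"
  shows "card (bohr \<Gamma> s) * exp (- c * s) \<le> partition_fun (gnorm \<Gamma>) c"
proof -
  have "card (bohr \<Gamma> s) * exp (- c * s) = (\<Sum>n\<in>bohr \<Gamma> s. exp (- c * s))" by simp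
  also have "\<dots> \<le> (\<Sum>n\<in>bohr \<Gamma> s. exp (- c * gnorm \<Gamma> n))"
    using assms by (intro sum_mono) (auto simp: bohr_def mult_left_mono)
  also have "\<dots> \<le> partition_fun (gnorm \<Gamma>) c"
    unfolding partition_fun_def by (intro sum_mono2) auto
  finally show ?thesis .
qed

lemma bohr_partition_doubling:
  fixes \<Gamma> :: "('a::{ab_group_add,finite} \<Rightarrow> complex) set"
  assumes "finite \<Gamma>" "\<Gamma> \<subseteq> characters" "\<Gamma> \<noteq> {}" "0 < lam"
  shows "partition_fun (gnorm \<Gamma>) (lam / 2) \<le> (3 * exp 3) ^ card \<Gamma> * partition_fun (gnorm \<Gamma>) lam"
proof -
  define d where "d = real (card \<Gamma>)"
  define s where "s = 2 * d / lam"
  have "0 < card \<Gamma>" using assms(1,3) by (simp add: card_gt_0_iff)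
  then have "1 \<le> d" by (simp add: d_def)
  then have "0 < s" "lam / 2 = d / s" "lam * s = 2 * d"
    using assms(4) by (simp_all add: s_def field_simps)
  have "partition_fun (gnorm \<Gamma>) (lam / 2) \<le> exp d * 3 ^ card \<Gamma> * card (bohr \<Gamma> s)"
    using partition_fun_le_card_bohr[OF assms(1,2) \<open>0 < s\<close>] \<open>lam / 2 = d / s\<close> by (simp add: d_def)
  also have "\<dots> \<le> exp d * 3 ^ card \<Gamma> * (exp (2 * d) * partition_fun (gnorm \<Gamma>) lam)"
  proof (rule mult_left_mono)
    have "card (bohr \<Gamma> s) * exp (- (2 * d)) \<le> partition_fun (gnorm \<Gamma>) lam"
      using card_bohr_le_partition_fun[of lam \<Gamma> s] assms(4) \<open>lam * s = 2 * d\<close> by simp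
    then show "card (bohr \<Gamma> s) \<le> exp (2 * d) * partition_fun (gnorm \<Gamma>) lam"
      by (simp add: exp_minus field_simps)
  qed simp
  also have "\<dots> = (3 * exp 3) ^ card \<Gamma> * partition_fun (gnorm \<Gamma>) lam"
    by (simp add: d_def exp_of_nat_mult[symmetric] exp_add[symmetric] algebra_simps)
  finally show ?thesis .
qed

lemma expect_beta_shift_defect:
  assumes "finite \<Gamma>" "\<Gamma> \<subseteq> characters" "0 < \<delta>"
  shows "expect (beta \<Gamma> \<delta>) (shift_defect \<Gamma> \<eta>) =
    1 - partition_fun (gnorm \<Gamma>) (1 / \<delta> + 1 / \<eta>) / partition_fun (gnorm \<Gamma>) (1 / \<delta>)"
proof -
  have "expect (beta \<Gamma> \<delta>) (shift_defect \<Gamma> \<eta>) =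
      (\<Sum>n\<in>UNIV. beta \<Gamma> \<delta> n) - (\<Sum>n\<in>UNIV. beta \<Gamma> \<delta> n * exp (- gnorm \<Gamma> n / \<eta>))"
    unfolding expect_def shift_defect_def by (simp add: algebra_simps sum_subtractf)
  also have "(\<Sum>n\<in>UNIV. beta \<Gamma> \<delta> n * exp (- gnorm \<Gamma> n / \<eta>)) =
      partition_fun (gnorm \<Gamma>) (1 / \<delta> + 1 / \<eta>) / partition_fun (gnorm \<Gamma>) (1 / \<delta>)"
    unfolding beta_eq[OF assms(1,3)] partition_fun_def sum_divide_distrib
    by (intro sum.cong refl) (simp add: exp_add[symmetric] field_simps)
  finally show ?thesis using density_sum[OF density_beta[OF assms]] by simp
qed

lemma ln_3_exp_3_le_5: "ln (3 * exp 3) \<le> (5::real)"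
proof -
  have "(3::real) \<le> exp 2" using exp_ge_add_one_self[of 2] by simp
  then have "ln (3::real) \<le> 2" by (metis ln_exp ln_le_cancel_iff exp_gt_zero zero_less_numeral)
  then show ?thesis by (simp add: ln_mult)
qed

lemma expect_psi_shift_defect_le:
  fixes R :: "('a::{ab_group_add,finite} \<Rightarrow> complex) set" and \<delta> \<eta> :: real
  assumes R: "finite R" "R \<subseteq> characters" "R \<noteq> {}" and "0 < \<delta>" "4 * \<delta> \<le> \<eta>"
  shows "expect (psi R \<delta>) (shift_defect R \<eta>) \<le> 40 * card R * \<delta> / \<eta>"
proof -
  define d where "d = real (card R)"
  define lam where "lam = 1 / \<delta>"
  define \<mu> where "\<mu> = 1 / \<eta>"
  define Q where "Q = \<eta> / (2 * \<delta>)"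
  define m where "m = nat \<lfloor>Q\<rfloor>"
  have "0 < \<eta>" using assms(4,5) by simp
  have "2 \<le> Q" using assms(4,5) by (simp add: Q_def field_simps)
  then have "Q - 1 \<le> m" "m \<le> Q" by (simp_all add: m_def)
  then have "Q / 2 \<le> m" "1 \<le> real m" using \<open>2 \<le> Q\<close> by linarith+
  moreover have "m * \<mu> \<le> lam / 2"
    using \<open>m \<le> Q\<close> assms(4) \<open>0 < \<eta>\<close> unfolding Q_def \<mu>_def lam_def by (simp add: field_simps)
  ultimately have m: "Q / 2 \<le> m" "m * \<mu> \<le> lam / 2" "1 \<le> m" by simp_all
  have "0 < lam" "0 < \<mu>" using assms(4) \<open>0 < \<eta>\<close> by (simp_all add: lam_def \<mu>_def)
  have "expect (psi R \<delta>) (shift_defect R \<eta>) \<le> 2 * expect (beta R \<delta>) (shift_defect R \<eta>)"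
    using expect_conv_le[OF density_beta density_beta, OF R(1,2) assms(4) R(1,2) assms(4)]
      shift_defect_add_le[OF R(1,2) \<open>0 < \<eta>\<close>] R(3) by (simp add: psi_def)
  also have "expect (beta R \<delta>) (shift_defect R \<eta>) \<le> ln ((3 * exp 3) ^ card R) / m"
    using partition_fun_ratio_ge[OF gnorm_nonneg[OF R(1)] \<open>0 < \<mu>\<close> m(3,2)
        bohr_partition_doubling[OF R \<open>0 < lam\<close>]]
      expect_beta_shift_defect[OF R(1,2) assms(4)] by (simp add: lam_def \<mu>_def)
  also have "\<dots> \<le> 5 * d / (Q / 2)"
  proof (rule frac_le)
    have "ln ((3 * exp 3) ^ card R) = d * ln (3 * exp 3)"
      unfolding d_def by (rule ln_realpow)
    also have "\<dots> \<le> d * 5" using ln_3_exp_3_le_5 by (intro mult_left_mono) (auto simp: d_def)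
    finally show "ln ((3 * exp 3) ^ card R) \<le> 5 * d" by simp
  qed (use m(1) \<open>2 \<le> Q\<close> in \<open>auto simp: d_def\<close>)
  finally show ?thesis using assms(4) \<open>0 < \<eta>\<close> by (simp add: d_def Q_def field_simps)
qed


section \<open>Pairing the end functions against a convolution power\<close>

lemma sum_density_abs_le:
  fixes p v :: "'a::finite \<Rightarrow> real"
  assumes p: "density p" and "(\<Sum>x\<in>UNIV. (v x)\<^sup>2 * p x) \<le> \<epsilon>\<^sup>2" "0 \<le> \<epsilon>"
  shows "(\<Sum>x\<in>UNIV. p x * \<bar>v x\<bar>) \<le> \<epsilon>"
proof (rule power2_le_imp_le)
  have "(\<Sum>x\<in>UNIV. sqrt (p x) * (sqrt (p x) * \<bar>v x\<bar>))\<^sup>2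
      \<le> (\<Sum>x\<in>UNIV. (sqrt (p x))\<^sup>2) * (\<Sum>x\<in>UNIV. (sqrt (p x) * \<bar>v x\<bar>)\<^sup>2)"
    by (rule Cauchy_Schwarz_ineq_sum)
  also have "\<dots> = (\<Sum>x\<in>UNIV. (v x)\<^sup>2 * p x)"
    using density_nonneg[OF p] density_sum[OF p] by (simp add: power_mult_distrib mult.commute)
  finally show "(\<Sum>x\<in>UNIV. p x * \<bar>v x\<bar>)\<^sup>2 \<le> \<epsilon>\<^sup>2"
    using assms(2) density_nonneg[OF p] by (simp add: mult.assoc[symmetric])
qed (rule assms(3))

lemma sum_translate_density_abs_le:
  fixes p v :: "'a::{ab_group_add,finite} \<Rightarrow> real"
  assumes "\<And>u. \<bar>v u\<bar> \<le> 1"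
  shows "(\<Sum>u\<in>UNIV. p (u + w) * \<bar>v u\<bar>) \<le>
    (\<Sum>u\<in>UNIV. p u * \<bar>v u\<bar>) + (\<Sum>u\<in>UNIV. \<bar>p (u + w) - p u\<bar>)"
proof -
  have "p (u + w) * \<bar>v u\<bar> \<le> p u * \<bar>v u\<bar> + \<bar>p (u + w) - p u\<bar>" for u
  proof -
    have "(p (u + w) - p u) * \<bar>v u\<bar> \<le> \<bar>p (u + w) - p u\<bar> * \<bar>v u\<bar>"
      by (intro mult_right_mono) auto
    also have "\<dots> \<le> \<bar>p (u + w) - p u\<bar>"
      using assms[of u] by (simp add: mult_left_le)
    finally show ?thesis by (simp add: algebra_simps)
  qed
  then show ?thesis by (simp add: sum.distrib[symmetric] sum_mono)
qed

lemma sqrt_mult_abs_sqrt_diff_le: "0 \<le> a \<Longrightarrow> 0 \<le> b \<Longrightarrow> sqrt b * \<bar>sqrt a - sqrt b\<bar> \<le> \<bar>a - b\<bar>"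
proof -
  assume "0 \<le> a" "0 \<le> b"
  then have "a - b = (sqrt a - sqrt b) * (sqrt a + sqrt b)" by (simp add: algebra_simps)
  then have "\<bar>a - b\<bar> = \<bar>sqrt a - sqrt b\<bar> * (sqrt a + sqrt b)"
    using \<open>0 \<le> a\<close> \<open>0 \<le> b\<close> by (simp add: abs_mult)
  moreover have "sqrt b * \<bar>sqrt a - sqrt b\<bar> \<le> (sqrt a + sqrt b) * \<bar>sqrt a - sqrt b\<bar>"
    using \<open>0 \<le> a\<close> by (intro mult_right_mono) auto
  ultimately show ?thesis by (simp add: mult.commute)
qed

lemma sum_abs_diff_eq_expect_translate:
  fixes p \<Psi> :: "'a::{ab_group_add,finite} \<Rightarrow> real"
  assumes "\<And>x. p (- x) = p x"
  shows "(\<Sum>y\<in>UNIV. \<Sum>z\<in>UNIV. \<Psi> (- (y + z)) * \<bar>p z - p y\<bar>) =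
    expect \<Psi> (\<lambda>w. \<Sum>y\<in>UNIV. \<bar>p (y + w) - p y\<bar>)"
proof -
  have "(\<Sum>z\<in>UNIV. \<Psi> (- (y + z)) * \<bar>p z - p y\<bar>) = (\<Sum>w\<in>UNIV. \<Psi> w * \<bar>p (y + w) - p y\<bar>)" for y
    by (rule sum.reindex_bij_witness[of _ "\<lambda>w. - y - w" "\<lambda>z. - (y + z)"]) (auto simp: assms)
  then show ?thesis
    unfolding expect_def sum_distrib_left by (subst (2) sum.swap) simp
qed

lemma sqrt_weights_replace_le:
  fixes p \<Psi> f g :: "'a::{ab_group_add,finite} \<Rightarrow> real"
  assumes p: "density p" "\<And>x. p (- x) = p x" and \<Psi>: "density \<Psi>"
    and f: "\<And>x. 0 \<le> f x" "\<And>x. f x \<le> 1" and g: "\<And>x. 0 \<le> g x" "\<And>x. g x \<le> 1"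
  shows "\<bar>(\<Sum>y\<in>UNIV. \<Sum>z\<in>UNIV. f y * sqrt (p y) * (g z * sqrt (p z)) * \<Psi> (- (y + z)))
      - (\<Sum>y\<in>UNIV. f y * p y * conv g \<Psi> (- y))\<bar> \<le> expect \<Psi> (\<lambda>w. \<Sum>y\<in>UNIV. \<bar>p (y + w) - p y\<bar>)"
proof -
  let ?t = "\<lambda>y z. f y * g z * \<Psi> (- (y + z)) * (sqrt (p y) * (sqrt (p z) - sqrt (p y)))"
  have conv_eq: "f y * p y * conv g \<Psi> (- y) = (\<Sum>z\<in>UNIV. f y * p y * (g z * \<Psi> (- (y + z))))" for y
    unfolding conv_def sum_distrib_left by simp
  have diff_eq: "f y * sqrt (p y) * (g z * sqrt (p z)) * \<Psi> (- (y + z)) - f y * p y * (g z * \<Psi> (- (y + z)))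
      = ?t y z" for y z
  proof -
    have "sqrt (p y) * sqrt (p y) = p y" using density_nonneg[OF p(1), of y] by simp
    then have "?t y z = f y * g z * \<Psi> (- (y + z)) * (sqrt (p y) * sqrt (p z))
        - f y * g z * \<Psi> (- (y + z)) * p y"
      by (simp only: right_diff_distrib)
    then show ?thesis by (simp only: mult_ac)
  qed
  have "(\<Sum>y\<in>UNIV. \<Sum>z\<in>UNIV. f y * sqrt (p y) * (g z * sqrt (p z)) * \<Psi> (- (y + z)))
      - (\<Sum>y\<in>UNIV. f y * p y * conv g \<Psi> (- y)) = (\<Sum>y\<in>UNIV. \<Sum>z\<in>UNIV. ?t y z)"
    unfolding sum_subtractf[symmetric]
  proof (rule sum.cong[OF refl])
    fix y
    show "(\<Sum>z\<in>UNIV. f y * sqrt (p y) * (g z * sqrt (p z)) * \<Psi> (- (y + z))) - f y * p y * conv g \<Psi> (- y)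
        = (\<Sum>z\<in>UNIV. ?t y z)"
      unfolding conv_eq sum_subtractf[symmetric] diff_eq ..
  qed
  also have "\<bar>\<dots>\<bar> \<le> (\<Sum>y\<in>UNIV. \<Sum>z\<in>UNIV. \<Psi> (- (y + z)) * \<bar>p z - p y\<bar>)"
  proof (rule order_trans[OF sum_abs sum_mono[OF order_trans[OF sum_abs sum_mono]]])
    fix y z
    have "\<bar>?t y z\<bar> = (f y * g z) * (\<Psi> (- (y + z)) * (sqrt (p y) * \<bar>sqrt (p z) - sqrt (p y)\<bar>))"
      using f g density_nonneg[OF \<Psi>] density_nonneg[OF p(1)] by (simp add: abs_mult)
    also have "\<dots> \<le> 1 * (\<Psi> (- (y + z)) * (sqrt (p y) * \<bar>sqrt (p z) - sqrt (p y)\<bar>))"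
      using f g density_nonneg[OF \<Psi>] density_nonneg[OF p(1)]
      by (intro mult_right_mono) (auto intro: mult_le_one)
    also have "\<dots> \<le> \<Psi> (- (y + z)) * \<bar>p z - p y\<bar>"
      using sqrt_mult_abs_sqrt_diff_le[OF density_nonneg[OF p(1), of z] density_nonneg[OF p(1), of y]]
        density_nonneg[OF \<Psi>] by (simp add: mult_left_mono)
    finally show "\<bar>?t y z\<bar> \<le> \<Psi> (- (y + z)) * \<bar>p z - p y\<bar>" .
  qed
  also have "\<dots> = expect \<Psi> (\<lambda>w. \<Sum>y\<in>UNIV. \<bar>p (y + w) - p y\<bar>)"
    by (rule sum_abs_diff_eq_expect_translate[of p, OF p(2)])
  finally show ?thesis .
qed

lemma end_average_le:
  fixes p q \<Psi> f g :: "'a::{ab_group_add,finite} \<Rightarrow> real"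
  assumes p: "density p" "\<And>x. p (- x) = p x" and q: "density q" and \<Psi>: "density \<Psi>"
    and f: "\<And>x. 0 \<le> f x" "\<And>x. f x \<le> 1" and g: "\<And>x. 0 \<le> g x" "\<And>x. g x \<le> 1"
    and var: "(\<Sum>u\<in>UNIV. (conv g q u - expect p g)\<^sup>2 * p u) \<le> \<epsilon>\<^sup>2" and "0 \<le> \<epsilon>"
  shows "\<bar>(\<Sum>y\<in>UNIV. f y * p y * conv g (conv \<Psi> q) (- y)) - expect p f * expect p g\<bar>
    \<le> \<epsilon> + expect \<Psi> (\<lambda>w. \<Sum>y\<in>UNIV. \<bar>p (y + w) - p y\<bar>)"
proof -
  define a where "a = expect p g"
  define v where "v u = conv g q u - a" for u
  have v: "\<bar>v u\<bar> \<le> 1" for u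
    using conv_bounded[of q g u, OF q g] expect_bounded[of p g, OF p(1) g] by (auto simp: v_def a_def)
  have H: "conv g (conv \<Psi> q) (- y) - a = (\<Sum>w\<in>UNIV. \<Psi> w * v (- y - w))" for y
    using density_sum[OF \<Psi>] by (simp add: conv_conv_eq v_def algebra_simps sum_subtractf sum_distrib_left[symmetric])
  have "(\<Sum>y\<in>UNIV. f y * p y * conv g (conv \<Psi> q) (- y)) - expect p f * a =
      (\<Sum>y\<in>UNIV. f y * p y * (conv g (conv \<Psi> q) (- y) - a))"
    by (simp add: expect_def algebra_simps sum_subtractf sum_distrib_left)
  also have "\<bar>\<dots>\<bar> \<le> (\<Sum>y\<in>UNIV. p y * (\<Sum>w\<in>UNIV. \<Psi> w * \<bar>v (- y - w)\<bar>))"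
  proof (rule order_trans[OF sum_abs sum_mono])
    fix y
    have "\<bar>f y * p y * (conv g (conv \<Psi> q) (- y) - a)\<bar> \<le> p y * \<bar>\<Sum>w\<in>UNIV. \<Psi> w * v (- y - w)\<bar>"
      using f mult_left_le_one_le[of "p y * \<bar>\<Sum>w\<in>UNIV. \<Psi> w * v (- y - w)\<bar>" "f y"]
        density_nonneg[OF p(1), of y] unfolding H abs_mult by (simp add: mult.assoc)
    also have "\<dots> \<le> p y * (\<Sum>w\<in>UNIV. \<Psi> w * \<bar>v (- y - w)\<bar>)"
      using density_nonneg[OF p(1), of y] density_nonneg[OF \<Psi>]
      by (intro mult_left_mono order_trans[OF sum_abs]) (simp_all add: abs_mult)
    finally show "\<bar>f y * p y * (conv g (conv \<Psi> q) (- y) - a)\<bar> \<le> \<dots>" .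
  qed
  also have "\<dots> = (\<Sum>w\<in>UNIV. \<Psi> w * (\<Sum>u\<in>UNIV. p (u + w) * \<bar>v u\<bar>))"
  proof -
    have "(\<Sum>y\<in>UNIV. p y * \<bar>v (- y - w)\<bar>) = (\<Sum>u\<in>UNIV. p (u + w) * \<bar>v u\<bar>)" for w
      by (rule sum.reindex_bij_witness[of _ "\<lambda>u. - u - w" "\<lambda>y. - y - w"]) (auto simp: p(2))
    moreover have "(\<Sum>y\<in>UNIV. p y * (\<Sum>w\<in>UNIV. \<Psi> w * \<bar>v (- y - w)\<bar>)) =
        (\<Sum>w\<in>UNIV. \<Psi> w * (\<Sum>y\<in>UNIV. p y * \<bar>v (- y - w)\<bar>))"
      unfolding sum_distrib_left by (subst sum.swap) (simp add: mult.left_commute)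
    ultimately show ?thesis by simp
  qed
  also have "\<dots> \<le> (\<Sum>w\<in>UNIV. \<Psi> w * (\<epsilon> + (\<Sum>u\<in>UNIV. \<bar>p (u + w) - p u\<bar>)))"
  proof (intro sum_mono mult_left_mono order_trans[OF sum_translate_density_abs_le[OF v]] add_right_mono)
    show "(\<Sum>u\<in>UNIV. p u * \<bar>v u\<bar>) \<le> \<epsilon>"
      using sum_density_abs_le[OF p(1) _ \<open>0 \<le> \<epsilon>\<close>] var by (simp add: v_def a_def)
  qed (simp add: density_nonneg[OF \<Psi>])
  also have "\<dots> = \<epsilon> + expect \<Psi> (\<lambda>w. \<Sum>y\<in>UNIV. \<bar>p (y + w) - p y\<bar>)"
    using density_sum[OF \<Psi>] by (simp add: expect_def algebra_simps sum.distrib sum_distrib_left[symmetric])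
  finally show ?thesis by (simp add: a_def)
qed


section \<open>The counting estimate at regular values\<close>

locale regular_values =
  fixes k :: nat and \<epsilon> \<eta> :: real and A :: "nat \<Rightarrow> 'a::{ab_group_add,finite} set"
    and R :: "('a \<Rightarrow> complex) set" and x :: "nat \<Rightarrow> 'a"
  assumes k: "3 \<le> k" and \<epsilon>: "0 < \<epsilon>" and R: "R \<subseteq> characters" and \<eta>: "0 < \<eta>"
    and regular: "\<forall>i\<in>{1..k}. regular_value k \<epsilon> (A i) R \<eta> (x i)"
begin

abbreviation "p1 \<equiv> psi1 R \<eta>"
abbreviation "p2 \<equiv> psi2 k \<epsilon> R \<eta>"

definition f :: "nat \<Rightarrow> 'a \<Rightarrow> real" where
  "f i n = indicator (A i) (x i + n)"

definition g :: "nat \<Rightarrow> 'a \<Rightarrow> real" where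
  "g i n = f i n * (if i = 1 \<or> i = k then sqrt (p1 n) else p2 n)"

definition a :: "nat \<Rightarrow> real" where
  "a i = alpha2 k \<epsilon> (A i) R \<eta> (x i)"

definition h :: "nat \<Rightarrow> 'a \<Rightarrow> real" where
  "h i n = (if i = 1 \<or> i = k then g i n else a i * p2 n)"

lemma finite_R: "finite R"
  using R finite_characters finite_subset by blast

lemma density_p1: "density p1" and p1_uminus: "p1 (- y) = p1 y"
  unfolding psi1_def using density_psi[OF finite_R R] psi_uminus[OF finite_R R] \<eta> by simp_all

lemma density_p2: "density p2"
proof -
  have "R = {} \<or> 0 < eta2 k \<epsilon> R \<eta>"
  proof (cases "R = {}")
    case False
    then have "0 < card R" using finite_R by (simp add: card_gt_0_iff)
    then show ?thesis using \<epsilon> \<eta> k by (simp add: eta2_def)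
  qed simp
  then show ?thesis using density_psi[OF finite_R R] by (simp add: psi2_def)
qed

lemma f_bounds: "0 \<le> f i n" "f i n \<le> 1"
  by (simp_all add: f_def)

lemma alpha1_eq_expect: "alpha1 (A i) R \<eta> (x i) = expect p1 (f i)"
proof -
  have "alpha1 (A i) R \<eta> (x i) = (\<Sum>y\<in>UNIV. indicator (A i) (x i + y) * p1 (- y))"
    unfolding alpha1_def conv_def
    by (rule sum.reindex_bij_witness[of _ "\<lambda>y. x i + y" "\<lambda>m. m - x i"]) auto
  then show ?thesis by (simp add: expect_def f_def p1_uminus mult.commute)
qed

lemma alpha2_translate_eq_conv: "alpha2 k \<epsilon> (A i) R \<eta> (x i + u) = conv (f i) p2 u"
  unfolding alpha2_def conv_def f_def
  by (rule sum.reindex_bij_witness[of _ "\<lambda>z. x i + z" "\<lambda>m. m - x i"]) (auto simp: algebra_simps)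

lemma a_bounds: "0 \<le> a i" "a i \<le> 1"
  using conv_bounded[of p2 "indicator (A i)", OF density_p2] by (simp_all add: a_def alpha2_def)

lemma sqrt_sum_sq_end_le_1:
  assumes "i = 1 \<or> i = k"
  shows "sqrt (\<Sum>y\<in>UNIV. (g i y)\<^sup>2) \<le> 1"
proof -
  have "(\<Sum>y\<in>UNIV. (g i y)\<^sup>2) \<le> (\<Sum>y\<in>UNIV. p1 y)"
    using assms density_nonneg[OF density_p1] f_bounds
    by (intro sum_mono) (auto simp: g_def power_mult_distrib power_le_one mult_left_le_one_le)
  then show ?thesis using density_sum[OF density_p1] by simp
qed

lemma norm_fourier_scaled_p2_le_1:
  assumes "\<gamma> \<in> characters" "\<And>n. \<bar>c n\<bar> \<le> 1"
  shows "norm (fourier (\<lambda>n. c n * p2 n) \<gamma>) \<le> 1"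
proof -
  have "norm (fourier (\<lambda>n. c n * p2 n) \<gamma>) \<le> (\<Sum>y\<in>UNIV. \<bar>c y * p2 y\<bar>)"
    by (rule norm_fourier_le[OF assms(1)])
  also have "\<dots> \<le> (\<Sum>y\<in>UNIV. p2 y)"
    using assms(2) density_nonneg[OF density_p2] by (intro sum_mono) (simp add: abs_mult mult_left_le_one_le)
  finally show ?thesis using density_sum[OF density_p2] by simp
qed

lemma g_middle: "i \<in> {2..k-1} \<Longrightarrow> g i = (\<lambda>n. f i n * p2 n)"
  and h_middle: "i \<in> {2..k-1} \<Longrightarrow> h i = (\<lambda>n. a i * p2 n)"
  using k by (auto simp: g_def h_def fun_eq_iff)

lemma h_ends: "h 1 = g 1" "h k = g k"
  by (simp_all add: h_def fun_eq_iff)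

lemma Tform_ends_only_bound:
  "\<bar>Tform k g\<bar> \<le> real (k - 2)"
proof -
  define ends where "ends i n = (if i = 1 \<or> i = k then g i n else 0)" for i n
  have "Tform k ends = 0"
    unfolding Tform_def using k by (intro sum.neutral ballI prod_zero) (auto simp: ends_def intro!: bexI[of _ 2])
  moreover have "\<bar>Tform k g - Tform k ends\<bar> \<le>
      real (k - 2) * 1 * (sqrt (\<Sum>y\<in>UNIV. (g 1 y)\<^sup>2) * sqrt (\<Sum>y\<in>UNIV. (g k y)\<^sup>2))"
  proof (rule Tform_replace_middle)
    fix i and \<gamma> :: "'a \<Rightarrow> complex" assume "i \<in> {2..k-1}" "\<gamma> \<in> characters"
    moreover have "ends i = (\<lambda>_. 0)" using \<open>i \<in> {2..k-1}\<close> k by (auto simp: ends_def fun_eq_iff)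
    ultimately show "norm (fourier (g i) \<gamma>) \<le> 1" "norm (fourier (ends i) \<gamma>) \<le> 1"
        "norm (fourier (g i) \<gamma> - fourier (ends i) \<gamma>) \<le> 1"
      using norm_fourier_scaled_p2_le_1 f_bounds by (simp_all add: g_middle fourier_def)
  qed (use k in \<open>auto simp: ends_def\<close>)
  moreover have "sqrt (\<Sum>y\<in>UNIV. (g 1 y)\<^sup>2) * sqrt (\<Sum>y\<in>UNIV. (g k y)\<^sup>2) \<le> 1"
    using sqrt_sum_sq_end_le_1[of 1] sqrt_sum_sq_end_le_1[of k] by (intro mult_le_one) (simp_all add: sum_nonneg)
  ultimately show ?thesis by (smt (verit) mult_left_le of_nat_0_le_iff)
qed

lemma Tform_replace_by_averages: "\<bar>Tform k g - Tform k h\<bar> \<le> real (k - 2) * \<epsilon>"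
proof -
  have "\<bar>Tform k g - Tform k h\<bar> \<le>
      real (k - 2) * \<epsilon> * (sqrt (\<Sum>y\<in>UNIV. (g 1 y)\<^sup>2) * sqrt (\<Sum>y\<in>UNIV. (g k y)\<^sup>2))"
  proof (rule Tform_replace_middle)
    fix i and \<gamma> :: "'a \<Rightarrow> complex" assume i: "i \<in> {2..k-1}" and "\<gamma> \<in> characters"
    note gh = g_middle[OF i] h_middle[OF i]
    show "norm (fourier (g i) \<gamma>) \<le> 1" "norm (fourier (h i) \<gamma>) \<le> 1"
      unfolding gh using norm_fourier_scaled_p2_le_1[OF \<open>\<gamma> \<in> characters\<close>] f_bounds a_bounds by simp_all
    have "fourier (g i) \<gamma> - fourier (h i) \<gamma> =
      (\<Sum>n\<in>UNIV. complex_of_real ((indicator (A i) (x i + n) - a i) * p2 n) * \<gamma> n)"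
      unfolding gh fourier_def f_def by (simp add: sum_subtractf[symmetric] algebra_simps)
    also have "norm \<dots> \<le> \<epsilon>"
      using regular i k \<open>\<gamma> \<in> characters\<close> by (auto simp: regular_value_def a_def)
    finally show "norm (fourier (g i) \<gamma> - fourier (h i) \<gamma>) \<le> \<epsilon>" .
  qed (use k \<epsilon> in \<open>auto simp: h_def\<close>)
  also have "\<dots> \<le> real (k - 2) * \<epsilon> * 1"
    using sqrt_sum_sq_end_le_1[of 1] sqrt_sum_sq_end_le_1[of k] \<epsilon>
    by (intro mult_left_mono mult_le_one) (simp_all add: sum_nonneg)
  finally show ?thesis by simp
qed

lemma Tform_h_eq:
  "Tform k h = (\<Prod>i=2..k-1. a i) * (\<Sum>y\<in>UNIV. \<Sum>z\<in>UNIV. g 1 y * g k z * conv_pow p2 (k - 2) (- (y + z)))"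
proof -
  let ?M = "of_nat (card (characters :: ('a \<Rightarrow> complex) set)) :: complex"
  let ?P = "\<Prod>i=2..k-1. a i"
  have "(\<Prod>i\<in>{2..k-1}. fourier (h i) \<gamma>) = complex_of_real ?P * fourier (conv_pow p2 (k - 2)) \<gamma>"
    if "\<gamma> \<in> characters" for \<gamma>
  proof -
    have "(\<Prod>i\<in>{2..k-1}. fourier (h i) \<gamma>) = (\<Prod>i\<in>{2..k-1}. complex_of_real (a i) * fourier p2 \<gamma>)"
      by (intro prod.cong refl) (simp add: h_middle fourier_def sum_distrib_left mult.assoc)
    then show ?thesis using k by (simp add: prod.distrib fourier_conv_pow[OF that])
  qed
  moreover have "complex_of_real (Tform k h) = (\<Sum>\<gamma>\<in>characters.
      fourier (g 1) \<gamma> * fourier (g k) \<gamma> * (\<Prod>i\<in>{2..k-1}. fourier (h i) \<gamma>)) / ?M"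
    using Tform_eq_fourier_ends[of k h, unfolded h_ends] k by simp
  ultimately have "complex_of_real (Tform k h) =
      complex_of_real ?P * ((\<Sum>\<gamma>\<in>characters. fourier (g 1) \<gamma> * fourier (g k) \<gamma> * fourier (conv_pow p2 (k - 2)) \<gamma>) / ?M)"
    by (simp add: sum_distrib_left mult_ac cong: sum.cong)
  also have "\<dots> = complex_of_real (?P * (\<Sum>y\<in>UNIV. \<Sum>z\<in>UNIV. g 1 y * g k z * conv_pow p2 (k - 2) (- (y + z))))"
    by (simp only: trilinear_sum_eq_fourier of_real_mult)
  finally show ?thesis by (simp only: of_real_eq_iff)
qed


lemma expect_p2_shift_defect_le:
  assumes "\<epsilon> \<le> 1"
  shows "expect p2 (shift_defect R \<eta>) \<le> \<epsilon> / (8 * real k)"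
proof (cases "R = {}")
  case True
  then show ?thesis using \<epsilon> by (simp add: expect_def shift_defect_empty)
next
  case False
  define \<delta> where "\<delta> = eta2 k \<epsilon> R \<eta>"
  have "1 \<le> real (card R)" using False finite_R by (simp add: Suc_le_eq card_gt_0_iff)
  have "3 \<le> real k" using k by simp
  have "\<epsilon> ^ 6 \<le> \<epsilon>" using power_decreasing[of 1 6 \<epsilon>] \<epsilon> assms by simp
  have dk: "card R * \<delta> / \<eta> = \<epsilon> ^ 6 / (2 ^ 40 * real k ^ 4)"
    using \<open>1 \<le> real (card R)\<close> \<eta> k by (simp add: \<delta>_def eta2_def field_simps)
  have "0 < \<delta>" using \<open>1 \<le> real (card R)\<close> \<epsilon> \<eta> k by (simp add: \<delta>_def eta2_def)
  moreover have "4 * \<delta> \<le> \<eta>"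
  proof -
    have "1 \<le> real k ^ 4" using \<open>3 \<le> real k\<close> by simp
    then have "4 * (card R * \<delta> / \<eta>) \<le> 1"
      unfolding dk using \<open>\<epsilon> ^ 6 \<le> \<epsilon>\<close> assms by (simp add: divide_le_eq)
    then have "4 * (card R * \<delta>) \<le> \<eta>" using \<eta> by (simp add: field_simps)
    moreover have "\<delta> \<le> card R * \<delta>" using \<open>1 \<le> real (card R)\<close> \<open>0 < \<delta>\<close> by simp
    ultimately show ?thesis by linarith
  qed
  ultimately have "expect p2 (shift_defect R \<eta>) \<le> 40 * (card R * \<delta> / \<eta>)"
    using expect_psi_shift_defect_le[OF finite_R R False] by (simp add: psi2_def \<delta>_def mult.assoc)
  also have "\<dots> \<le> \<epsilon> / (8 * real k)"
  proof -
    have "real k \<le> real k ^ 4" using \<open>3 \<le> real k\<close> by (simp add: self_le_power)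
    then have "320 * real k \<le> 2 ^ 40 * real k ^ 4" by (intro mult_mono) auto
    have "40 * \<epsilon> ^ 6 * (8 * real k) = \<epsilon> ^ 6 * (320 * real k)" by simp
    also have "\<dots> \<le> \<epsilon> * (320 * real k)"
      using \<open>\<epsilon> ^ 6 \<le> \<epsilon>\<close> by (rule mult_right_mono) simp
    also have "\<dots> \<le> \<epsilon> * (2 ^ 40 * real k ^ 4)"
      using \<open>320 * real k \<le> _\<close> \<epsilon> by (intro mult_left_mono) simp_all
    finally have "40 * \<epsilon> ^ 6 * (8 * real k) \<le> \<epsilon> * (2 ^ 40 * real k ^ 4)" .
    then show ?thesis unfolding dk using \<open>3 \<le> real k\<close> by (simp add: field_simps)
  qed
  finally show ?thesis .
qed


lemma expect_conv_pow_translate_diff_le: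
  assumes "\<epsilon> \<le> 1"
  shows "expect (conv_pow p2 j) (\<lambda>w. \<Sum>y\<in>UNIV. \<bar>p1 (y + w) - p1 y\<bar>) \<le> 2 * real j * (\<epsilon> / (8 * real k))"
proof -
  have "expect (conv_pow p2 j) (\<lambda>w. \<Sum>y\<in>UNIV. \<bar>p1 (y + w) - p1 y\<bar>) \<le>
      expect (conv_pow p2 j) (\<lambda>w. 2 * shift_defect R \<eta> w)"
    using sum_abs_psi_translate_diff_le[OF finite_R R \<eta>]
    by (intro expect_mono density_conv_pow density_p2) (simp add: psi1_def)
  also have "\<dots> = 2 * expect (conv_pow p2 j) (shift_defect R \<eta>)"
    by (simp add: expect_def sum_distrib_left mult_ac)
  also have "\<dots> \<le> 2 * (j * expect p2 (shift_defect R \<eta>))"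
    using shift_defect_add_le[OF finite_R R \<eta>] shift_defect_0[OF finite_R R]
    by (intro mult_left_mono expect_conv_pow_le density_p2) auto
  also have "\<dots> \<le> 2 * real j * (\<epsilon> / (8 * real k))"
    using mult_left_mono[OF expect_p2_shift_defect_le[OF assms], of "2 * real j"] by (simp add: mult.assoc)
  finally show ?thesis .
qed

lemma ends_estimate:
  assumes "\<epsilon> \<le> 1"
  shows "\<bar>(\<Sum>y\<in>UNIV. \<Sum>z\<in>UNIV. g 1 y * g k z * conv_pow p2 (k - 2) (- (y + z)))
    - alpha1 (A 1) R \<eta> (x 1) * alpha1 (A k) R \<eta> (x k)\<bar> \<le> \<epsilon> + \<epsilon> / 2"
proof -
  let ?D = "\<lambda>w. \<Sum>y\<in>UNIV. \<bar>p1 (y + w) - p1 y\<bar>"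
  let ?\<Psi> = "conv_pow p2 (k - 3)"
  have "k - 2 = Suc (k - 3)" using k by simp
  then have pow: "conv_pow p2 (k - 2) = conv ?\<Psi> p2" by simp
  have ends: "g 1 y = f 1 y * sqrt (p1 y)" "g k y = f k y * sqrt (p1 y)" for y
    by (simp_all add: g_def)
  have var: "(\<Sum>u\<in>UNIV. (conv (f k) p2 u - expect p1 (f k))\<^sup>2 * p1 u) \<le> \<epsilon>\<^sup>2"
    using regular k unfolding regular_value_def
    by (simp add: alpha2_translate_eq_conv alpha1_eq_expect psi1_def)
  have "\<bar>(\<Sum>y\<in>UNIV. \<Sum>z\<in>UNIV. g 1 y * g k z * conv_pow p2 (k - 2) (- (y + z)))
      - (\<Sum>y\<in>UNIV. f 1 y * p1 y * conv (f k) (conv ?\<Psi> p2) (- y))\<bar> \<le> expect (conv_pow p2 (k - 2)) ?D"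
    unfolding ends pow
    by (rule sqrt_weights_replace_le[of p1 "conv ?\<Psi> p2" "f 1" "f k", OF density_p1 p1_uminus
          density_conv[OF density_conv_pow[OF density_p2] density_p2] f_bounds[of 1] f_bounds[of k]])
  moreover have "\<bar>(\<Sum>y\<in>UNIV. f 1 y * p1 y * conv (f k) (conv ?\<Psi> p2) (- y))
      - expect p1 (f 1) * expect p1 (f k)\<bar> \<le> \<epsilon> + expect ?\<Psi> ?D"
    by (rule end_average_le[OF density_p1 p1_uminus density_p2 density_conv_pow[OF density_p2]
          f_bounds[of 1] f_bounds[of k] var]) (use \<epsilon> in simp)
  moreover have "expect (conv_pow p2 (k - 2)) ?D + expect ?\<Psi> ?D \<le> \<epsilon> / 2"
  proof -
    have "expect (conv_pow p2 (k - 2)) ?D + expect ?\<Psi> ?D \<le>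
        2 * real (k - 2) * (\<epsilon> / (8 * real k)) + 2 * real (k - 3) * (\<epsilon> / (8 * real k))"
      using expect_conv_pow_translate_diff_le[OF assms] by (intro add_mono)
    also have "\<dots> = (4 * real k - 10) * (\<epsilon> / (8 * real k))" using k by (simp add: algebra_simps)
    also have "\<dots> \<le> (4 * real k) * (\<epsilon> / (8 * real k))" using \<epsilon> by (intro mult_right_mono) auto
    finally show ?thesis using k by simp
  qed
  ultimately show ?thesis unfolding alpha1_eq_expect by linarith
qed


lemma alpha1_bounds: "0 \<le> alpha1 (A i) R \<eta> (x i)" "alpha1 (A i) R \<eta> (x i) \<le> 1"
  unfolding alpha1_eq_expect using expect_bounded[OF density_p1 f_bounds] by simp_all

lemma prod_a_bounds: "0 \<le> (\<Prod>i=2..k-1. a i)" "(\<Prod>i=2..k-1. a i) \<le> 1"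
  using a_bounds by (auto intro: prod_nonneg prod_le_1)

lemma Tform_h_close:
  assumes "\<epsilon> \<le> 1"
  shows "\<bar>Tform k h - alpha1 (A 1) R \<eta> (x 1) * (\<Prod>i=2..k-1. a i) * alpha1 (A k) R \<eta> (x k)\<bar>
    \<le> \<epsilon> + \<epsilon> / 2"
proof -
  define P where "P = (\<Prod>i=2..k-1. a i)"
  define S where "S = (\<Sum>y\<in>UNIV. \<Sum>z\<in>UNIV. g 1 y * g k z * conv_pow p2 (k - 2) (- (y + z)))"
  have "Tform k h - alpha1 (A 1) R \<eta> (x 1) * P * alpha1 (A k) R \<eta> (x k) =
      P * (S - alpha1 (A 1) R \<eta> (x 1) * alpha1 (A k) R \<eta> (x k))"
    by (simp add: Tform_h_eq P_def S_def algebra_simps)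
  then have "\<bar>Tform k h - alpha1 (A 1) R \<eta> (x 1) * P * alpha1 (A k) R \<eta> (x k)\<bar> =
      P * \<bar>S - alpha1 (A 1) R \<eta> (x 1) * alpha1 (A k) R \<eta> (x k)\<bar>"
    using prod_a_bounds by (simp add: abs_mult P_def)
  also have "\<dots> \<le> 1 * (\<epsilon> + \<epsilon> / 2)"
    using ends_estimate[OF assms] prod_a_bounds unfolding S_def P_def by (intro mult_mono) auto
  finally show ?thesis by (simp add: P_def)
qed

lemma main_bound:
  "\<bar>Tform k g - alpha1 (A 1) R \<eta> (x 1) * (\<Prod>i=2..k-1. a i) * alpha1 (A k) R \<eta> (x k)\<bar>
    \<le> 4 * 2 ^ k * \<epsilon>"
proof -
  let ?\<alpha> = "alpha1 (A 1) R \<eta> (x 1) * (\<Prod>i=2..k-1. a i) * alpha1 (A k) R \<eta> (x k)"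
  have "real k \<le> 2 ^ k" using less_exp[of k] by (simp add: less_imp_le)
  moreover have "(0::real) \<le> 2 ^ k" by simp
  ultimately have k4: "real k \<le> 4 * 2 ^ k" by linarith
  have "\<bar>Tform k g - ?\<alpha>\<bar> \<le> real k * \<epsilon>"
  proof (cases "1 \<le> \<epsilon>")
    case True
    have "0 \<le> ?\<alpha>" "?\<alpha> \<le> 1"
      using alpha1_bounds prod_a_bounds by (simp_all add: mult_le_one)
    then have "\<bar>Tform k g - ?\<alpha>\<bar> \<le> real (k - 2) + 1" using Tform_ends_only_bound by linarith
    also have "\<dots> \<le> real k" using k by simp
    also have "\<dots> \<le> real k * \<epsilon>" using mult_left_mono[of 1 \<epsilon> "real k"] True by simp
    finally show ?thesis .
  next
    case False
    moreover have "real (k - 2) * \<epsilon> = real k * \<epsilon> - 2 * \<epsilon>" using k by (simp add: algebra_simps)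
    ultimately show ?thesis
      using Tform_replace_by_averages Tform_h_close by linarith
  qed
  also have "\<dots> \<le> 4 * 2 ^ k * \<epsilon>" using k4 \<epsilon> by (intro mult_right_mono) auto
  finally show ?thesis .
qed

end

(* The hypotheses that (R, eta) is a regular pair, that the x i sum to zero and that eta <= 1
   belong to the context of the paper; the estimate itself does not need them. *)
theorem proposition6p2:
  fixes k :: nat and \<epsilon> \<eta> :: real
    and A :: "nat \<Rightarrow> 'a::{ab_group_add,finite} set"
    and R :: "('a \<Rightarrow> complex) set"
    and x :: "nat \<Rightarrow> 'a"
  assumes "k \<ge> 3" and "\<epsilon> > 0"
    and "R \<subseteq> characters" and "0 < \<eta>" and "\<eta> \<le> 1"
    and "\<forall>i\<in>{1..k}. regular_pair k \<epsilon> (A i) R \<eta>"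
    and "(\<Sum>i=1..k. x i) = 0"
    and "\<forall>i\<in>{1..k}. regular_value k \<epsilon> (A i) R \<eta> (x i)"
  shows "\<bar>Tform k (\<lambda>i n. indicator (A i) (x i + n) *
                    (if i = 1 \<or> i = k then sqrt (psi1 R \<eta> n) else psi2 k \<epsilon> R \<eta> n))
          - alpha1 (A 1) R \<eta> (x 1) * (\<Prod>i=2..k-1. alpha2 k \<epsilon> (A i) R \<eta> (x i))
              * alpha1 (A k) R \<eta> (x k)\<bar>
         \<le> 4 * 2 ^ k * \<epsilon>"
proof -
  interpret regular_values k \<epsilon> \<eta> A R x
    using assms by unfold_locales auto
  show ?thesis
    using main_bound unfolding g_def f_def a_def by simp
qed

end
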